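(* Let $G$ be a finite abelian group, $M$ a $\mathbb{Z}[G]$-lattice and $r\ge1$. Then the map $P$ restricts to an isomorphism of $\mathbb{Z}[G]$-modules \[ \wedge_0^rM\xrightarrow{\ \sim\ }(M,G)^r_\star . \]
   Context: A $\mathbb{Z}[G]$-lattice is a finitely generated $\mathbb{Z}[G]$-module that is free as a $\mathbb{Z}$-module; write $m^\sigma$ for the action of $\sigma\in G$ on $m\in M$. For a $\mathbb{Z}[G]$-module $N$ write $\mathbb{Q}N=\mathbb{Q}\otimes_{\mathbb{Z}}N$ and $N[G]=N\otimes_{\mathbb{Z}}\mathbb{Z}[G]$. Let $G$ act on $(\bigotimes^r_{\mathbb{Z}}M)[G]$ by $\sigma(m_1\otimes\dots\otimes m_r\otimes[\tau])=m_1\otimes\dots\otimes m_r\otimes[\sigma\tau]$, and for $\sigma\in G$ let $c_\sigma(m_1\otimes\dots\otimes m_r\otimes[\tau])=m_1^\sigma\otimes m_2\otimes\dots\otimes m_r\otimes[\tau]$. The symmetric group $\mathfrak{S}_r$ acts on $(\bigotimes^rM)[G]$ by permuting the tensor factors of $\bigotimes^rM$; $m$ is antisymmetric if $fm=\mathrm{sgn}(f)m$ for all $f\in\mathfrak S_r$. Define $(M,G)^r_\star=\{m\in(\bigotimes^r_{\mathbb{Z}}M)[G]: m\text{ antisymmetric and }c_\sigma(m)=\sigma m\ \forall\sigma\in G\}$. For $\varphi_1,\dots,\varphi_r\in\mathrm{Hom}_{\mathbb{Z}[G]}(M,\mathbb{Z}[G])$ let $\varphi_1\wedge\dots\wedge\varphi_r$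 be the map $\mathbb{Q}\wedge^r_{\mathbb{Z}[G]}M\to\mathbb{Q}[G]$, $m_1\wedge\dots\wedge m_r\mapsto\det(\varphi_i(m_j))$. Rubin's lattice is $\wedge_0^rM=\{m\in\mathbb{Q}\wedge^r_{\mathbb{Z}[G]}M:(\varphi_1\wedge\dots\wedge\varphi_r)(m)\in\mathbb{Z}[G]\ \forall\varphi_1,\dots,\varphi_r\}$. Define the $\mathbb{Z}[G]$-linear map $P:\mathbb{Q}\wedge^r_{\mathbb{Z}[G]}M\to\mathbb{Q}(\bigotimes^r_{\mathbb{Z}}M)[G]$ by $P(m_1\wedge\dots\wedge m_r)=\sum_{f\in\mathfrak S_r}\mathrm{sgn}(f)\bigotimes_{j=1}^r\Big(\sum_{\sigma\in G}m_{f(j)}^{\sigma^{-1}}[\sigma]\Big)$, where for elements $\sum_\sigma a_{j,\sigma}[\sigma]\in M[G]$ ($1\le j\le r$) their tensor $\bigotimes_j$ means $\sum_{\sigma_1,\dots,\sigma_r}a_{1,\sigma_1}\otimes\dots\otimes a_{r,\sigma_r}[\sigma_1\cdots\sigma_r]$. *)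

theory Defs
  imports "HOL-Library.Poly_Mapping" "HOL-Combinatorics.Permutations" "Jordan_Normal_Form.Determinant"
begin

(* The finite abelian group G is a type 'g of class ab_group_add and finite (written additively:
  the group law sigma tau is sigma + tau, sigma inverse is - sigma, unit is 0).
  The group ring Z[G] is ('g \<Rightarrow>\<^sub>0 int) and Q[G] is ('g \<Rightarrow>\<^sub>0 rat) (library Poly_Mapping,
  whose multiplication is convolution over 'g); [sigma] is Poly_Mapping.single sigma 1.
  A Z[G]-lattice M of Z-rank n is taken in coordinates: M = Z^n, realised as the functions
  nat \<Rightarrow> int vanishing outside {0..<n}, and sigma acts by the integer matrix rho sigma
  (entries rho sigma i j, i,j < n), so that m^sigma = (rho sigma) *v m. *)

definition lat :: "nat \<Rightarrow> (nat \<Rightarrow> int) set" where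
  "lat n = {v. \<forall>i\<ge>n. v i = 0}"

definition act :: "('g \<Rightarrow> nat \<Rightarrow> nat \<Rightarrow> int) \<Rightarrow> nat \<Rightarrow> 'g \<Rightarrow> (nat \<Rightarrow> int) \<Rightarrow> (nat \<Rightarrow> int)" where
  "act \<rho> n \<sigma> v = (\<lambda>i. if i < n then (\<Sum>j<n. \<rho> \<sigma> i j * v j) else 0)"

definition is_lattice_rep :: "nat \<Rightarrow> ('g::ab_group_add \<Rightarrow> nat \<Rightarrow> nat \<Rightarrow> int) \<Rightarrow> bool" where
  "is_lattice_rep n \<rho> \<longleftrightarrow>
     (\<forall>v\<in>lat n. act \<rho> n 0 v = v) \<and>
     (\<forall>\<sigma> \<tau>. \<forall>v\<in>lat n. act \<rho> n (\<sigma> + \<tau>) v = act \<rho> n \<sigma> (act \<rho> n \<tau> v))"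

definition tuples :: "nat \<Rightarrow> nat \<Rightarrow> (nat \<Rightarrow> int) list set" where
  "tuples n r = {t. length t = r \<and> set t \<subseteq> lat n}"

definition formal :: "nat \<Rightarrow> nat \<Rightarrow> ((nat \<Rightarrow> int) list \<Rightarrow> rat) set" where
  "formal n r = {x. finite {t. x t \<noteq> 0} \<and> {t. x t \<noteq> 0} \<subseteq> tuples n r}"

definition delta :: "'a \<Rightarrow> 'a \<Rightarrow> rat" where
  "delta t = (\<lambda>u. if u = t then 1 else 0)"

(* Generators of the relations defining \<and>^r_{Z[G]} M as a quotient of the free abelian group
  on r-tuples: additivity in each slot, Z[G]-balancedness (moving sigma between slots), and
  vanishing of tuples with two equal entries. *)
definition rel_gens :: "('g \<Rightarrow> nat \<Rightarrow> nat \<Rightarrow> int) \<Rightarrow> nat \<Rightarrow> nat \<Rightarrow> ((nat \<Rightarrow> int) list \<Rightarrow> rat) set" where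
  "rel_gens \<rho> n r =
     {(\<lambda>u. delta (t[i := (\<lambda>k. a k + b k)]) u - delta (t[i := a]) u - delta (t[i := b]) u)
        | t i a b. t \<in> tuples n r \<and> i < r \<and> a \<in> lat n \<and> b \<in> lat n}
   \<union> {(\<lambda>u. delta (t[i := act \<rho> n \<sigma> (t ! i)]) u - delta (t[j := act \<rho> n \<sigma> (t ! j)]) u)
        | t i j \<sigma>. t \<in> tuples n r \<and> i < r \<and> j < r}
   \<union> {delta t | t i j. t \<in> tuples n r \<and> i < j \<and> j < r \<and> t ! i = t ! j}"

inductive_set rel_span :: "('g \<Rightarrow> nat \<Rightarrow> nat \<Rightarrow> int) \<Rightarrow> nat \<Rightarrow> nat \<Rightarrow> ((nat \<Rightarrow> int) list \<Rightarrow> rat) set"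
  for \<rho> n r where
  zero: "(\<lambda>_. 0) \<in> rel_span \<rho> n r"
| gen: "g \<in> rel_gens \<rho> n r \<Longrightarrow> g \<in> rel_span \<rho> n r"
| add: "x \<in> rel_span \<rho> n r \<Longrightarrow> y \<in> rel_span \<rho> n r \<Longrightarrow> (\<lambda>u. x u + y u) \<in> rel_span \<rho> n r"
| smult: "x \<in> rel_span \<rho> n r \<Longrightarrow> (\<lambda>u. c * x u) \<in> rel_span \<rho> n r"

definition is_hom :: "('g::ab_group_add \<Rightarrow> nat \<Rightarrow> nat \<Rightarrow> int) \<Rightarrow> nat \<Rightarrow> ((nat \<Rightarrow> int) \<Rightarrow> ('g \<Rightarrow>\<^sub>0 int)) \<Rightarrow> bool" where
  "is_hom \<rho> n \<phi> \<longleftrightarrow>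
     (\<forall>u\<in>lat n. \<forall>v\<in>lat n. \<phi> (\<lambda>k. u k + v k) = \<phi> u + \<phi> v) \<and>
     (\<forall>\<sigma>. \<forall>u\<in>lat n. \<phi> (act \<rho> n \<sigma> u) = Poly_Mapping.single \<sigma> 1 * \<phi> u)"

(* (phi_1 \<and> ... \<and> phi_r)(x) in Q[G], for x a formal sum; on a tuple it is det(phi_i(m_j)). *)
definition wedge_hom :: "nat \<Rightarrow> (nat \<Rightarrow> (nat \<Rightarrow> int) \<Rightarrow> ('g::ab_group_add \<Rightarrow>\<^sub>0 int)) \<Rightarrow> ((nat \<Rightarrow> int) list \<Rightarrow> rat) \<Rightarrow> ('g \<Rightarrow>\<^sub>0 rat)" where
  "wedge_hom r \<phi>s x =
     (\<Sum>t\<in>{t. x t \<noteq> 0}. Poly_Mapping.single 0 (x t) *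
        Poly_Mapping.map of_int (det (mat r r (\<lambda>(i, j). \<phi>s i (t ! j)))))"

(* Rubin's lattice \<and>_0^r M (as a set of representatives). *)
definition rubin :: "('g::ab_group_add \<Rightarrow> nat \<Rightarrow> nat \<Rightarrow> int) \<Rightarrow> nat \<Rightarrow> nat \<Rightarrow> ((nat \<Rightarrow> int) list \<Rightarrow> rat) set" where
  "rubin \<rho> n r = {x \<in> formal n r. \<forall>\<phi>s. (\<forall>i<r. is_hom \<rho> n (\<phi>s i)) \<longrightarrow>
      wedge_hom r \<phi>s x \<in> range (Poly_Mapping.map (of_int :: int \<Rightarrow> rat))}"

(* A tensor T : nat list \<Rightarrow> 'g \<Rightarrow> rat stands for
  the sum of T is tau * e_{is!0} \<otimes> ... \<otimes> e_{is!(r-1)} \<otimes> [tau]. *)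
type_synonym ('g) tensor = "nat list \<Rightarrow> 'g \<Rightarrow> rat"

definition in_Qtensor :: "nat \<Rightarrow> nat \<Rightarrow> 'g tensor \<Rightarrow> bool" where
  "in_Qtensor n r T \<longleftrightarrow> (\<forall>is \<tau>. (length is \<noteq> r \<or> (\<exists>i\<in>set is. n \<le> i)) \<longrightarrow> T is \<tau> = 0)"

definition in_tensor :: "nat \<Rightarrow> nat \<Rightarrow> 'g tensor \<Rightarrow> bool" where
  "in_tensor n r T \<longleftrightarrow> in_Qtensor n r T \<and> (\<forall>is \<tau>. T is \<tau> \<in> \<int>)"

definition antisymmetric :: "nat \<Rightarrow> 'g tensor \<Rightarrow> bool" where
  "antisymmetric r T \<longleftrightarrow> (\<forall>f. f permutes {..<r} \<longrightarrow>
     (\<forall>is \<tau>. length is = r \<longrightarrow> T (map (\<lambda>j. is ! f j) [0..<r]) \<tau> = of_int (sign f) * T is \<tau>))"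

definition c_act :: "('g \<Rightarrow> nat \<Rightarrow> nat \<Rightarrow> int) \<Rightarrow> nat \<Rightarrow> 'g \<Rightarrow> 'g tensor \<Rightarrow> 'g tensor" where
  "c_act \<rho> n \<sigma> T = (\<lambda>is \<tau>. case is of [] \<Rightarrow> T [] \<tau>
      | i # rest \<Rightarrow> if i < n then (\<Sum>j<n. of_int (\<rho> \<sigma> i j) * T (j # rest) \<tau>) else 0)"

(* The G-action on the group ring factor: [tau] \<mapsto> [sigma tau]. *)
definition g_act :: "'g::ab_group_add \<Rightarrow> 'g tensor \<Rightarrow> 'g tensor" where
  "g_act \<sigma> T = (\<lambda>is \<tau>. T is (\<tau> - \<sigma>))"

definition star :: "('g::ab_group_add \<Rightarrow> nat \<Rightarrow> nat \<Rightarrow> int) \<Rightarrow> nat \<Rightarrow> nat \<Rightarrow> 'g tensor set" where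
  "star \<rho> n r = {T. in_tensor n r T \<and> antisymmetric r T \<and> (\<forall>\<sigma>. c_act \<rho> n \<sigma> T = g_act \<sigma> T)}"

(* P(m_1 \<and> ... \<and> m_r) in coordinates:
  sum over f in S_r of sgn f times the sum over (sigma_1,...,sigma_r) of
  m_{f 1}^{sigma_1^{-1}} \<otimes> ... \<otimes> m_{f r}^{sigma_r^{-1}} [sigma_1 ... sigma_r]. *)
definition P_tuple :: "('g::{ab_group_add,finite} \<Rightarrow> nat \<Rightarrow> nat \<Rightarrow> int) \<Rightarrow> nat \<Rightarrow> nat \<Rightarrow> (nat \<Rightarrow> int) list \<Rightarrow> 'g tensor" where
  "P_tuple \<rho> n r t = (\<lambda>is \<tau>. if length is = r then
     (\<Sum>f | f permutes {..<r}. of_int (sign f) *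
        (\<Sum>s \<in> {s \<in> PiE {..<r} (\<lambda>_. UNIV). (\<Sum>j<r. s j) = \<tau>}.
           (\<Prod>j<r. of_int (act \<rho> n (- s j) (t ! f j) (is ! j)))))
     else 0)"

definition P_map :: "('g::{ab_group_add,finite} \<Rightarrow> nat \<Rightarrow> nat \<Rightarrow> int) \<Rightarrow> nat \<Rightarrow> nat \<Rightarrow> ((nat \<Rightarrow> int) list \<Rightarrow> rat) \<Rightarrow> 'g tensor" where
  "P_map \<rho> n r x = (\<lambda>is \<tau>. \<Sum>t\<in>{t. x t \<noteq> 0}. x t * P_tuple \<rho> n r t is \<tau>)"

end

theory Submission
  imports Defs "HOL-Library.Function_Algebras"
begin

text \<open>
  \<open>P\<close> kills the defining relations of the exterior power: \<open>P_tuple\<close> is additive in each slot,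
  alternating, and moving \<open>\<sigma>\<close> into any slot shifts the group-ring factor by \<open>\<sigma>\<close>, because the
  sum over \<open>(\<sigma>\<^sub>1, \<dots>, \<sigma>\<^sub>r)\<close> is a convolution. The same convolution structure makes \<open>P(x)\<close>
  antisymmetric with \<open>c\<^sub>\<sigma> = \<sigma>\<close>.

  Everything else rests on \<open>Q(T) = \<Sum> T(e\<^sub>i\<^sub>1 \<otimes> \<dots> \<otimes> e\<^sub>i\<^sub>r, [1]) e\<^sub>i\<^sub>1 \<and> \<dots> \<and> e\<^sub>i\<^sub>r\<close>. Expanding multilinearly in the
  standard basis and moving all group elements into one slot shows \<open>Q(P(x)) = r! |G|\<^sup>r\<^sup>-\<^sup>1 x\<close>
  modulo the relations; dually, antisymmetry and \<open>c\<^sub>\<sigma> = \<sigma>\<close> in every slot give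
  \<open>P(Q(T)) = r! |G|\<^sup>r\<^sup>-\<^sup>1 T\<close> on \<open>(M, G)\<^sup>r\<^sub>\<star>\<close>. So \<open>P\<close> is injective and hits every element of
  \<open>(M, G)\<^sup>r\<^sub>\<star>\<close> rationally.

  Integrality: for the coordinate homomorphisms \<open>\<phi>\<^sub>k(m) = \<Sum>\<^sub>\<sigma> (m\<^sup>\<sigma>\<^sup>-\<^sup>1)\<^sub>k [\<sigma>]\<close> the coefficients of
  \<open>(\<phi>\<^sub>i\<^sub>1 \<and> \<dots> \<and> \<phi>\<^sub>i\<^sub>r)(x)\<close> are exactly the coordinates of \<open>P(x)\<close>, and every \<open>\<phi>\<^sub>1 \<and> \<dots> \<and> \<phi>\<^sub>r\<close> is
  an integral combination of such coordinates. Hence \<open>x\<close> lies in Rubin's lattice iff \<open>P(x)\<close> is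
  integral.
\<close>

section \<open>Convolution over a finite abelian group\<close>

definition sum_fiber :: "nat \<Rightarrow> 'g::ab_group_add \<Rightarrow> (nat \<Rightarrow> 'g) set" where
  "sum_fiber r \<tau> = {s \<in> PiE {..<r} (\<lambda>_. UNIV). (\<Sum>j<r. s j) = \<tau>}"

definition convolution :: "nat \<Rightarrow> (nat \<Rightarrow> 'g::ab_group_add \<Rightarrow> 'a::comm_ring_1) \<Rightarrow> 'g \<Rightarrow> 'a" where
  "convolution r F \<tau> = (\<Sum>s\<in>sum_fiber r \<tau>. \<Prod>j<r. F j (s j))"

lemma finite_sum_fiber [simp]: "finite (sum_fiber r (\<tau>::'g::{ab_group_add,finite}))"
  unfolding sum_fiber_def by (rule finite_subset[of _ "PiE {..<r} (\<lambda>_. UNIV)"]) (auto intro: finite_PiE)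

lemma sum_fiber_Suc:
  "sum_fiber (Suc r) \<tau> = (\<lambda>(\<sigma>, s). s(r := \<sigma>)) ` (SIGMA \<sigma>:UNIV. sum_fiber r (\<tau> - \<sigma>))"
proof (rule equalityI; rule subsetI)
  fix x assume x: "x \<in> sum_fiber (Suc r) \<tau>"
  let ?s = "restrict x {..<r}"
  have "x = ?s(r := x r)" using x unfolding sum_fiber_def
    by (auto simp: PiE_def extensional_def fun_eq_iff)
  moreover have "?s \<in> sum_fiber r (\<tau> - x r)" using x unfolding sum_fiber_def
    by (auto simp: PiE_def extensional_def algebra_simps)
  ultimately show "x \<in> (\<lambda>(\<sigma>, s). s(r := \<sigma>)) ` (SIGMA \<sigma>:UNIV. sum_fiber r (\<tau> - \<sigma>))"
    by (auto intro!: image_eqI[of _ _ "(x r, ?s)"])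
next
  fix x assume "x \<in> (\<lambda>(\<sigma>, s). s(r := \<sigma>)) ` (SIGMA \<sigma>:UNIV. sum_fiber r (\<tau> - \<sigma>))"
  then obtain \<sigma> s where x: "x = s(r := \<sigma>)" and s: "s \<in> sum_fiber r (\<tau> - \<sigma>)" by auto
  have "(\<Sum>j<Suc r. x j) = (\<Sum>j<r. s j) + \<sigma>" using x by (simp add: sum.lessThan_Suc)
  then show "x \<in> sum_fiber (Suc r) \<tau>" using s x unfolding sum_fiber_def
    by (auto simp: PiE_def extensional_def)
qed

lemma inj_on_sum_fiber_Suc:
  "inj_on (\<lambda>(\<sigma>, s). s(r := \<sigma>)) (SIGMA \<sigma>:UNIV. sum_fiber r (\<tau> - \<sigma>))"
proof (rule inj_onI, clarsimp)
  fix a s b s'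
  assume s: "s \<in> sum_fiber r (\<tau> - a)" and s': "s' \<in> sum_fiber r (\<tau> - b)"
    and eq: "s(r := a) = s'(r := b)"
  have "s j = s' j" for j
    using fun_cong[OF eq, of j] s s' unfolding sum_fiber_def
    by (cases "j = r") (auto simp: PiE_def extensional_def)
  then show "a = b \<and> s = s'" using fun_cong[OF eq, of r] by auto
qed

lemma convolution_0: "convolution 0 F \<tau> = (if \<tau> = 0 then 1 else 0)"
proof -
  have "sum_fiber 0 \<tau> = (if \<tau> = 0 then {\<lambda>_. undefined} else {})"
    unfolding sum_fiber_def by auto
  then show ?thesis unfolding convolution_def by simp
qed

lemma convolution_Suc:
  fixes F :: "nat \<Rightarrow> 'g::{ab_group_add,finite} \<Rightarrow> 'a::comm_ring_1"
  shows "convolution (Suc r) F \<tau> = (\<Sum>\<sigma>\<in>UNIV. convolution r F (\<tau> - \<sigma>) * F r \<sigma>)"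
proof -
  have "convolution (Suc r) F \<tau> =
      (\<Sum>(\<sigma>, s)\<in>(SIGMA \<sigma>:UNIV. sum_fiber r (\<tau> - \<sigma>)). \<Prod>j<Suc r. F j ((s(r := \<sigma>)) j))"
    unfolding convolution_def sum_fiber_Suc
    by (subst sum.reindex[OF inj_on_sum_fiber_Suc]) (simp add: comp_def case_prod_beta)
  also have "\<dots> = (\<Sum>\<sigma>\<in>UNIV. \<Sum>s\<in>sum_fiber r (\<tau> - \<sigma>). (\<Prod>j<r. F j (s j)) * F r \<sigma>)"
    by (subst sum.Sigma[symmetric]) (auto simp: prod.lessThan_Suc intro!: sum.cong prod.cong)
  finally show ?thesis
    unfolding convolution_def by (simp add: sum_distrib_right)
qed

lemma convolution_one:
  assumes "r \<ge> 1"
  shows "convolution r (\<lambda>_ _. 1::'a::comm_ring_1) (\<tau>::'g::{ab_group_add,finite})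
    = of_nat (card (UNIV::'g set)) ^ (r - 1)"
  using assms
proof (induction r arbitrary: \<tau>)
  case (Suc r)
  show ?case
  proof (cases "r = 0")
    case True
    then show ?thesis by (simp add: convolution_Suc convolution_0 sum.delta)
  next
    case False
    then show ?thesis by (simp add: convolution_Suc Suc.IH power_eq_if)
  qed
qed simp

lemma card_sum_fiber:
  assumes "r \<ge> 1"
  shows "card (sum_fiber r (\<tau>::'g::{ab_group_add,finite})) = card (UNIV::'g set) ^ (r - 1)"
proof -
  have "int (card (sum_fiber r \<tau>)) = convolution r (\<lambda>_ _. 1) \<tau>"
    unfolding convolution_def by simp
  then show ?thesis using convolution_one[OF assms, where 'a=int, of \<tau>] by simp
qed

lemma lookup_mult_finite:
  fixes f g :: "'g::{ab_group_add,finite} \<Rightarrow>\<^sub>0 'a::comm_ring_1"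
  shows "Poly_Mapping.lookup (f * g) k = (\<Sum>l\<in>UNIV. Poly_Mapping.lookup f (k - l) * Poly_Mapping.lookup g l)"
proof -
  have Sum_any_UNIV: "Sum_any h = sum h UNIV" for h :: "'g \<Rightarrow> 'a"
    by (rule Sum_any.expand_superset) auto
  have "Poly_Mapping.lookup (f * g) k = (\<Sum>l\<in>UNIV. Poly_Mapping.lookup f l * (\<Sum>q\<in>UNIV. if q = k - l then Poly_Mapping.lookup g q else 0))"
    unfolding lookup_mult Sum_any_UNIV
    by (intro sum.cong refl arg_cong[where f="\<lambda>x. _ * x"]) (auto simp: when_def algebra_simps)
  also have "\<dots> = (\<Sum>l\<in>UNIV. Poly_Mapping.lookup f l * Poly_Mapping.lookup g (k - l))" by simp
  also have "\<dots> = (\<Sum>l\<in>UNIV. Poly_Mapping.lookup f (k - l) * Poly_Mapping.lookup g l)"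
    by (rule sum.reindex_bij_witness[where i="\<lambda>l. k - l" and j="\<lambda>l. k - l"]) auto
  finally show ?thesis .
qed

lemma lookup_prod_convolution:
  fixes a :: "nat \<Rightarrow> 'g::{ab_group_add,finite} \<Rightarrow>\<^sub>0 'a::comm_ring_1"
  shows "Poly_Mapping.lookup (\<Prod>i<r. a i) \<tau> = convolution r (\<lambda>i. Poly_Mapping.lookup (a i)) \<tau>"
proof (induction r arbitrary: \<tau>)
  case 0
  then show ?case by (auto simp: convolution_0 lookup_one when_def)
next
  case (Suc r)
  show ?case unfolding convolution_Suc prod.lessThan_Suc lookup_mult_finite Suc.IH ..
qed

lemma convolution_cong:
  "(\<And>j \<sigma>. j < r \<Longrightarrow> F j \<sigma> = F' j \<sigma>) \<Longrightarrow> convolution r F \<tau> = convolution r F' \<tau>"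
  unfolding convolution_def by (intro sum.cong prod.cong) auto

lemma convolution_zero_factor:
  "j < r \<Longrightarrow> (\<And>\<sigma>. F j \<sigma> = 0) \<Longrightarrow> convolution r F \<tau> = 0"
  unfolding convolution_def by (intro sum.neutral ballI prod_zero) auto

lemma update_in_sum_fiber:
  assumes "s \<in> sum_fiber r \<tau>" "i < r"
  shows "s(i := s i + d) \<in> sum_fiber r (\<tau> + d)"
proof -
  have "(\<Sum>j<r. (s(i := s i + d)) j) = (\<Sum>j<r. s j) + d"
    using assms(2) by (simp add: sum.remove[of "{..<r}" i] algebra_simps)
  then show ?thesis using assms unfolding sum_fiber_def by (auto simp: PiE_def extensional_def)
qed

lemma convolution_update:
  assumes "i < r"
  shows "convolution r (F(i := H)) \<tau> = (\<Sum>s\<in>sum_fiber r \<tau>. H (s i) * (\<Prod>j\<in>{..<r}-{i}. F j (s j)))"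
  unfolding convolution_def using assms
  by (intro sum.cong refl) (subst prod.remove[of _ i], auto intro!: prod.cong)

lemma convolution_shift:
  fixes F :: "nat \<Rightarrow> 'g::{ab_group_add,finite} \<Rightarrow> 'a::comm_ring_1"
  assumes i: "i < r"
  shows "convolution r (F(i := \<lambda>x. G (x - \<sigma>))) \<tau> = convolution r (F(i := G)) (\<tau> - \<sigma>)"
  unfolding convolution_update[OF i]
proof (rule sum.reindex_bij_witness[where j="\<lambda>s. s(i := s i + - \<sigma>)" and i="\<lambda>s. s(i := s i + \<sigma>)"])
  fix s assume "s \<in> sum_fiber r \<tau>"
  then show "s(i := s i + - \<sigma>) \<in> sum_fiber r (\<tau> - \<sigma>)"
    using update_in_sum_fiber[of s r \<tau> i "- \<sigma>"] i by simp
next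
  fix s assume "s \<in> sum_fiber r (\<tau> - \<sigma>)"
  then show "s(i := s i + \<sigma>) \<in> sum_fiber r \<tau>"
    using update_in_sum_fiber[of s r "\<tau> - \<sigma>" i \<sigma>] i by simp
qed (auto intro!: prod.cong)

lemma convolution_linear:
  assumes i: "i < r"
  shows "convolution r (F(i := \<lambda>x. \<Sum>k\<in>K. c k * G k x)) \<tau>
    = (\<Sum>k\<in>K. c k * convolution r (F(i := G k)) \<tau>)"
  unfolding convolution_update[OF i]
  by (simp add: sum_distrib_right sum_distrib_left mult.assoc) (rule sum.swap)

lemma convolution_add:
  assumes i: "i < r"
  shows "convolution r (F(i := \<lambda>x. G x + H x)) \<tau>
    = convolution r (F(i := G)) \<tau> + convolution r (F(i := H)) \<tau>"
  unfolding convolution_update[OF i] by (simp add: distrib_right sum.distrib)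

lemma convolution_permute:
  fixes F :: "nat \<Rightarrow> 'g::{ab_group_add,finite} \<Rightarrow> 'a::comm_ring_1"
  assumes g: "g permutes {..<r}"
  shows "convolution r (\<lambda>j. F (g j)) \<tau> = convolution r F \<tau>"
  unfolding convolution_def
proof (rule sum.reindex_bij_witness[where j="\<lambda>s. restrict (s \<circ> Hilbert_Choice.inv g) {..<r}"
                                      and i="\<lambda>s. restrict (s \<circ> g) {..<r}"])
  have inv: "\<And>x. g (Hilbert_Choice.inv g x) = x" "\<And>x. Hilbert_Choice.inv g (g x) = x"
    using g permutes_inverses by metis+
  have range: "\<And>x. g x < r \<longleftrightarrow> x < r" "\<And>x. Hilbert_Choice.inv g x < r \<longleftrightarrow> x < r"
    using permutes_in_image[OF g] permutes_in_image[OF permutes_inv[OF g]] by auto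
  have sums: "(\<Sum>j<r. s (g j)) = (\<Sum>j<r. s j)" "(\<Sum>j<r. s (Hilbert_Choice.inv g j)) = (\<Sum>j<r. s j)"
    for s :: "nat \<Rightarrow> 'g"
    using sum.permute[OF g, of s] sum.permute[OF permutes_inv[OF g], of s] by (simp_all add: comp_def)
  fix s assume s: "s \<in> sum_fiber r \<tau>"
  then show "restrict (restrict (s \<circ> Hilbert_Choice.inv g) {..<r} \<circ> g) {..<r} = s"
    "restrict (restrict (s \<circ> g) {..<r} \<circ> Hilbert_Choice.inv g) {..<r} = s"
    "restrict (s \<circ> Hilbert_Choice.inv g) {..<r} \<in> sum_fiber r \<tau>"
    "restrict (s \<circ> g) {..<r} \<in> sum_fiber r \<tau>"
    unfolding sum_fiber_def using sums[of s]
    by (auto simp: fun_eq_iff inv range PiE_def extensional_def)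
  show "(\<Prod>j<r. F j (restrict (s \<circ> Hilbert_Choice.inv g) {..<r} j)) = (\<Prod>j<r. F (g j) (s j))"
    using prod.permute[OF g, of "\<lambda>j. F j (restrict (s \<circ> Hilbert_Choice.inv g) {..<r} j)"]
    by (auto simp: comp_def inv range intro!: prod.cong)
qed

section \<open>The map \<open>P\<close> on tuples\<close>

lemma act_in_lat [simp]: "act \<rho> n \<sigma> v \<in> lat n"
  unfolding act_def lat_def by auto

lemma act_outside [simp]: "i \<ge> n \<Longrightarrow> act \<rho> n \<sigma> v i = 0"
  unfolding act_def by auto

lemma act_add: "act \<rho> n \<sigma> (\<lambda>k. u k + v k) i = act \<rho> n \<sigma> u i + act \<rho> n \<sigma> v i"
  unfolding act_def by (auto simp: algebra_simps sum.distrib)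

lemma act_act:
  "is_lattice_rep n \<rho> \<Longrightarrow> v \<in> lat n \<Longrightarrow> act \<rho> n \<sigma> (act \<rho> n \<tau> v) = act \<rho> n (\<sigma> + \<tau>) v"
  unfolding is_lattice_rep_def by auto

lemma act_zero:
  "is_lattice_rep n \<rho> \<Longrightarrow> v \<in> lat n \<Longrightarrow> act \<rho> n 0 v = v"
  unfolding is_lattice_rep_def by auto

lemma tuples_nth: "t \<in> tuples n r \<Longrightarrow> k < r \<Longrightarrow> t ! k \<in> lat n"
  unfolding tuples_def by auto

lemma tuples_length: "t \<in> tuples n r \<Longrightarrow> length t = r"
  unfolding tuples_def by auto

lemma tuples_update: "t \<in> tuples n r \<Longrightarrow> v \<in> lat n \<Longrightarrow> t[i := v] \<in> tuples n r"
  unfolding tuples_def by (auto dest: set_update_subset_insert[THEN subsetD])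

lemma finite_permutes_lessThan [simp]: "finite {f. f permutes {..<(r::nat)}}"
  by (rule finite_permutations) simp

lemma permutes_lessThanD:
  assumes "f permutes {..<(r::nat)}"
  shows "f (Hilbert_Choice.inv f x) = x" "Hilbert_Choice.inv f (f x) = x"
    "f x < r \<longleftrightarrow> x < r" "Hilbert_Choice.inv f x < r \<longleftrightarrow> x < r"
  using assms permutes_inverses permutes_in_image[OF assms]
    permutes_in_image[OF permutes_inv[OF assms]]
  by (metis, metis, auto)

lemma permutation_of_permutes_lessThan: "f permutes {..<(r::nat)} \<Longrightarrow> permutation f"
  by (rule permutes_imp_permutation) auto

definition P_factors ::
    "('g::ab_group_add \<Rightarrow> nat \<Rightarrow> nat \<Rightarrow> int) \<Rightarrow> nat \<Rightarrow> (nat \<Rightarrow> int) list \<Rightarrow> nat list \<Rightarrow> (nat \<Rightarrow> nat)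
      \<Rightarrow> nat \<Rightarrow> 'g \<Rightarrow> rat" where
  "P_factors \<rho> n t is f = (\<lambda>j \<sigma>. of_int (act \<rho> n (- \<sigma>) (t ! f j) (is ! j)))"

lemma P_tuple_eq_convolution:
  "P_tuple \<rho> n r t is \<tau> = (if length is = r then
     (\<Sum>f | f permutes {..<r}. of_int (sign f) * convolution r (P_factors \<rho> n t is f) \<tau>) else 0)"
  unfolding P_tuple_def convolution_def sum_fiber_def P_factors_def by simp

lemma P_tuple_outside:
  assumes "length is \<noteq> r \<or> (\<exists>i\<in>set is. n \<le> i)"
  shows "P_tuple \<rho> n r t is \<tau> = 0"
proof (cases "length is = r")
  case True
  with assms obtain j where "j < r" "n \<le> is ! j" by (metis in_set_conv_nth)
  then have "convolution r (P_factors \<rho> n t is f) \<tau> = 0" for f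
    by (intro convolution_zero_factor[of j]) (auto simp: P_factors_def)
  then show ?thesis unfolding P_tuple_eq_convolution by simp
qed (simp add: P_tuple_eq_convolution)

lemma P_factors_update:
  assumes f: "f permutes {..<r}" and i: "i < r" and t: "length t = r"
  shows "P_factors \<rho> n (t[i := v]) is f
    = (P_factors \<rho> n t is f)(Hilbert_Choice.inv f i := \<lambda>\<sigma>. of_int (act \<rho> n (- \<sigma>) v (is ! Hilbert_Choice.inv f i)))"
  using permutes_lessThanD[OF f] i t
  by (auto simp: fun_eq_iff P_factors_def nth_list_update)

lemma P_tuple_update_act:
  assumes R: "is_lattice_rep n \<rho>" and t: "t \<in> tuples n r" and i: "i < r"
  shows "P_tuple \<rho> n r (t[i := act \<rho> n \<sigma> (t ! i)]) is \<tau> = P_tuple \<rho> n r t is (\<tau> - \<sigma>)"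
proof -
  have "convolution r (P_factors \<rho> n (t[i := act \<rho> n \<sigma> (t ! i)]) is f) \<tau>
      = convolution r (P_factors \<rho> n t is f) (\<tau> - \<sigma>)" if f: "f permutes {..<r}" for f
  proof -
    let ?j = "Hilbert_Choice.inv f i"
    have j: "?j < r" "f ?j = i" using i permutes_lessThanD[OF f] by auto
    have "act \<rho> n (- x) (act \<rho> n \<sigma> (t ! i)) = act \<rho> n (- (x - \<sigma>)) (t ! i)" for x
      using act_act[OF R tuples_nth[OF t i]] by (simp add: algebra_simps)
    then have "P_factors \<rho> n (t[i := act \<rho> n \<sigma> (t ! i)]) is f
        = (P_factors \<rho> n t is f)(?j := \<lambda>x. P_factors \<rho> n t is f ?j (x - \<sigma>))"
      unfolding P_factors_update[OF f i tuples_length[OF t]] using j by (simp add: P_factors_def)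
    then show ?thesis using convolution_shift[OF j(1), of _ "P_factors \<rho> n t is f ?j"] by simp
  qed
  then show ?thesis unfolding P_tuple_eq_convolution by simp
qed

lemma P_tuple_update_add:
  assumes t: "t \<in> tuples n r" and i: "i < r"
  shows "P_tuple \<rho> n r (t[i := (\<lambda>k. a k + b k)]) is \<tau>
    = P_tuple \<rho> n r (t[i := a]) is \<tau> + P_tuple \<rho> n r (t[i := b]) is \<tau>"
proof -
  have "convolution r (P_factors \<rho> n (t[i := (\<lambda>k. a k + b k)]) is f) \<tau>
      = convolution r (P_factors \<rho> n (t[i := a]) is f) \<tau>
        + convolution r (P_factors \<rho> n (t[i := b]) is f) \<tau>" if f: "f permutes {..<r}" for f
  proof -
    let ?j = "Hilbert_Choice.inv f i"
    have j: "?j < r" using permutes_lessThanD(4)[OF f] i by simp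
    let ?G = "\<lambda>v \<sigma>. of_int (act \<rho> n (- \<sigma>) v (is ! ?j)) :: rat"
    have "?G (\<lambda>k. a k + b k) = (\<lambda>\<sigma>. ?G a \<sigma> + ?G b \<sigma>)" by (simp add: act_add)
    then show ?thesis
      unfolding P_factors_update[OF f i tuples_length[OF t]] using convolution_add[OF j] by simp
  qed
  then show ?thesis unfolding P_tuple_eq_convolution
    by (simp add: sum.distrib distrib_left)
qed

lemma sign_mult_sign: "of_int (sign f) * (of_int (sign f) * x) = (x :: 'a::ring_1)"
  by (metis mult.assoc mult_1 of_int_1 of_int_mult sign_idempotent)

lemma sum_signed_eq_0_if_transpose_invariant:
  fixes X :: "(nat \<Rightarrow> nat) \<Rightarrow> 'a::{idom,ring_char_0}"
  assumes ab: "a < r" "b < r" "a \<noteq> b"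
    and X: "\<And>f. f permutes {..<r} \<Longrightarrow> X (Transposition.transpose a b \<circ> f) = X f"
  shows "(\<Sum>f | f permutes {..<r}. of_int (sign f) * X f) = 0"
proof -
  let ?w = "Transposition.transpose a b"
  have w: "?w permutes {..<r}" using ab by (intro permutes_swap_id) auto
  have "(\<Sum>f | f permutes {..<r}. of_int (sign f) * X f)
      = (\<Sum>f | f permutes {..<r}. of_int (sign (?w \<circ> f)) * X (?w \<circ> f))"
    by (rule sum.reindex_bij_witness[where i="\<lambda>f. ?w \<circ> f" and j="\<lambda>f. ?w \<circ> f"])
       (auto simp: comp_assoc[symmetric] permutes_compose[OF _ w])
  also have "\<dots> = (\<Sum>f | f permutes {..<r}. - (of_int (sign f) * X f))"
    using ab by (intro sum.cong refl)
      (simp add: X sign_compose[OF permutes_imp_permutation[OF _ w] permutation_of_permutes_lessThan]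
        sign_swap_id)
  finally show ?thesis by (simp add: sum_negf)
qed

lemma P_tuple_repeated:
  assumes "i < j" "j < r" and "t ! i = t ! j"
  shows "P_tuple \<rho> n r t is \<tau> = 0"
proof -
  have "t ! (Transposition.transpose i j k) = t ! k" for k
    using assms(3) by (auto simp: Transposition.transpose_def)
  then have "(\<Sum>f | f permutes {..<r}. of_int (sign f) * convolution r (P_factors \<rho> n t is f) \<tau>) = 0"
    using assms(1,2) by (intro sum_signed_eq_0_if_transpose_invariant[of i r j]) (auto simp: P_factors_def)
  then show ?thesis unfolding P_tuple_eq_convolution by simp
qed

lemma P_tuple_permute_indices:
  assumes len: "length is = r" and g: "g permutes {..<r}"
  shows "P_tuple \<rho> n r t (map (\<lambda>j. is ! g j) [0..<r]) \<tau> = of_int (sign g) * P_tuple \<rho> n r t is \<tau>"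
proof -
  let ?g' = "Hilbert_Choice.inv g" and ?is = "map (\<lambda>j. is ! g j) [0..<r]"
  note g_facts = permutes_lessThanD[OF g]
  have "convolution r (P_factors \<rho> n t ?is f) \<tau> = convolution r (P_factors \<rho> n t is (f \<circ> ?g')) \<tau>" for f
  proof -
    have "convolution r (P_factors \<rho> n t ?is f) \<tau>
        = convolution r (\<lambda>j. P_factors \<rho> n t is (f \<circ> ?g') (g j)) \<tau>"
      by (rule convolution_cong) (simp add: P_factors_def g_facts)
    also have "\<dots> = convolution r (P_factors \<rho> n t is (f \<circ> ?g')) \<tau>"
      by (rule convolution_permute[OF g])
    finally show ?thesis .
  qed
  then have "(\<Sum>f | f permutes {..<r}. of_int (sign f) * convolution r (P_factors \<rho> n t ?is f) \<tau>)
      = (\<Sum>f | f permutes {..<r}. of_int (sign f) * convolution r (P_factors \<rho> n t is (f \<circ> ?g')) \<tau>)"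
    by simp
  also have "\<dots> = (\<Sum>h | h permutes {..<r}. of_int (sign (h \<circ> g)) * convolution r (P_factors \<rho> n t is h) \<tau>)"
    by (rule sum.reindex_bij_witness[where i="\<lambda>h. h \<circ> g" and j="\<lambda>f. f \<circ> ?g'"])
       (use permutes_compose[OF permutes_inv[OF g]] permutes_compose[OF g] in \<open>auto simp: comp_def g_facts\<close>)
  also have "\<dots> = of_int (sign g)
      * (\<Sum>h | h permutes {..<r}. of_int (sign h) * convolution r (P_factors \<rho> n t is h) \<tau>)"
    by (simp add: sum_distrib_left algebra_simps
        sign_compose[OF permutation_of_permutes_lessThan permutation_of_permutes_lessThan[OF g]])
  finally show ?thesis unfolding P_tuple_eq_convolution using len by simp
qed

lemma P_tuple_Cons_shift:
  assumes R: "is_lattice_rep n \<rho>" and t: "t \<in> tuples n r"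
    and i: "i < n" and len: "length (i # rest) = r"
  shows "P_tuple \<rho> n r t (i # rest) (\<tau> - \<sigma>)
    = (\<Sum>k<n. of_int (\<rho> \<sigma> i k) * P_tuple \<rho> n r t (k # rest) \<tau>)"
proof -
  have r: "0 < r" using len by auto
  have "convolution r (P_factors \<rho> n t (i # rest) f) (\<tau> - \<sigma>)
      = (\<Sum>k<n. of_int (\<rho> \<sigma> i k) * convolution r (P_factors \<rho> n t (k # rest) f) \<tau>)"
    if f: "f permutes {..<r}" for f
  proof -
    let ?F = "\<lambda>is. P_factors \<rho> n t is f" and ?v = "t ! f 0"
    have v: "?v \<in> lat n" using tuples_nth[OF t] permutes_lessThanD(3)[OF f] r by auto
    have shifted: "(\<Sum>k<n. of_int (\<rho> \<sigma> i k) * ?F (k # rest) 0 x) = ?F (i # rest) 0 (x - \<sigma>)" for x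
    proof -
      have "(\<Sum>k<n. of_int (\<rho> \<sigma> i k) * ?F (k # rest) 0 x)
          = of_int (act \<rho> n \<sigma> (act \<rho> n (- x) ?v) i)"
        using i by (simp add: P_factors_def act_def)
      then show ?thesis using act_act[OF R v] by (simp add: P_factors_def algebra_simps)
    qed
    have "(\<Sum>k<n. of_int (\<rho> \<sigma> i k) * convolution r (?F (k # rest)) \<tau>)
        = (\<Sum>k<n. of_int (\<rho> \<sigma> i k) * convolution r ((?F (i # rest))(0 := ?F (k # rest) 0)) \<tau>)"
      by (intro sum.cong refl arg_cong[where f="\<lambda>x. _ * x"] convolution_cong)
         (auto simp: P_factors_def nth_Cons')
    also have "\<dots> = convolution r ((?F (i # rest))(0 := \<lambda>x. ?F (i # rest) 0 (x - \<sigma>))) \<tau>"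
      using r by (simp add: convolution_linear[symmetric] shifted)
    also have "\<dots> = convolution r (?F (i # rest)) (\<tau> - \<sigma>)"
      using convolution_shift[OF r, of "?F (i # rest)" "?F (i # rest) 0"] by simp
    finally show ?thesis by simp
  qed
  then show ?thesis unfolding P_tuple_eq_convolution using len
    by (simp add: sum_distrib_left sum.swap[where A="{..<n}"] algebra_simps)
qed

lemma c_act_P_tuple:
  assumes R: "is_lattice_rep n \<rho>" and t: "t \<in> tuples n r" and r: "r \<ge> 1"
  shows "c_act \<rho> n \<sigma> (P_tuple \<rho> n r t) = g_act \<sigma> (P_tuple \<rho> n r t)"
proof (intro ext)
  fix "is" \<tau>
  show "c_act \<rho> n \<sigma> (P_tuple \<rho> n r t) is \<tau> = g_act \<sigma> (P_tuple \<rho> n r t) is \<tau>"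
  proof (cases "is")
    case Nil then show ?thesis using r unfolding c_act_def g_act_def by (simp add: P_tuple_outside)
  next
    case (Cons i rest)
    then show ?thesis unfolding c_act_def g_act_def
      using P_tuple_Cons_shift[OF R t, of i rest \<tau> \<sigma>]
      by (cases "length is = r") (auto simp: P_tuple_outside)
  qed
qed

section \<open>Additive maps on \<open>\<int>\<^sup>n\<close> modulo a subgroup\<close>

definition basis_vec :: "nat \<Rightarrow> nat \<Rightarrow> int" where
  "basis_vec k = (\<lambda>l. if l = k then 1 else 0)"

lemma basis_vec_in_lat: "k < n \<Longrightarrow> basis_vec k \<in> lat n"
  unfolding basis_vec_def lat_def by auto

lemma inj_basis_vec: "inj basis_vec"
  by (rule injI) (metis basis_vec_def zero_neq_one)

lemma lat_eq_sum_basis_vec: "v \<in> lat n \<Longrightarrow> v = (\<lambda>l. \<Sum>k<n. v k * basis_vec k l)"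
  by (auto simp: fun_eq_iff lat_def basis_vec_def if_distrib sum.delta cong: if_cong)

lemma zero_in_lat [simp]: "(\<lambda>k. 0) \<in> lat n"
  unfolding lat_def by simp

lemma lat_add: "a \<in> lat n \<Longrightarrow> b \<in> lat n \<Longrightarrow> (\<lambda>k. a k + b k) \<in> lat n"
  unfolding lat_def by auto

lemma lat_scale: "a \<in> lat n \<Longrightarrow> (\<lambda>k. c * a k) \<in> lat n"
  unfolding lat_def by auto

lemma lat_sum: "(\<And>m. m \<in> K \<Longrightarrow> a m \<in> lat n) \<Longrightarrow> (\<lambda>l. \<Sum>m\<in>K. c m * a m l) \<in> lat n"
  unfolding lat_def by auto

locale additive_modulo =
  fixes n :: nat and \<psi> :: "(nat \<Rightarrow> int) \<Rightarrow> 'b::comm_ring_1" and V :: "'b set"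
  assumes add_mem: "x \<in> V \<Longrightarrow> y \<in> V \<Longrightarrow> x + y \<in> V"
    and uminus_mem: "x \<in> V \<Longrightarrow> - x \<in> V"
    and additive: "u \<in> lat n \<Longrightarrow> v \<in> lat n \<Longrightarrow> \<psi> (\<lambda>k. u k + v k) - \<psi> u - \<psi> v \<in> V"
begin

lemma diff_mem: "x \<in> V \<Longrightarrow> y \<in> V \<Longrightarrow> x - y \<in> V"
  using add_mem[OF _ uminus_mem] by (metis diff_conv_add_uminus)

lemma zero_vec: "\<psi> (\<lambda>k. 0) \<in> V"
  using uminus_mem[OF additive[OF zero_in_lat zero_in_lat]] by simp

lemma of_nat_scale: "a \<in> lat n \<Longrightarrow> \<psi> (\<lambda>k. int m * a k) - of_nat m * \<psi> a \<in> V"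
proof (induction m)
  case 0 then show ?case using zero_vec by simp
next
  case (Suc m)
  have "(\<lambda>k. int (Suc m) * a k) = (\<lambda>k. int m * a k + a k)" by (simp add: fun_eq_iff algebra_simps)
  then have "\<psi> (\<lambda>k. int (Suc m) * a k) - of_nat (Suc m) * \<psi> a
      = (\<psi> (\<lambda>k. int m * a k + a k) - \<psi> (\<lambda>k. int m * a k) - \<psi> a) + (\<psi> (\<lambda>k. int m * a k) - of_nat m * \<psi> a)"
    by (simp add: algebra_simps)
  also have "\<dots> \<in> V" by (intro add_mem additive lat_scale Suc)
  finally show ?case .
qed

lemma of_int_scale:
  assumes a: "a \<in> lat n"
  shows "\<psi> (\<lambda>k. c * a k) - of_int c * \<psi> a \<in> V"
proof (cases "c \<ge> 0")
  case True
  then show ?thesis using of_nat_scale[OF a, of "nat c"] by simp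
next
  case False
  define m where "m = nat (- c)"
  then have c: "c = - int m" using False by simp
  have "(\<lambda>k. c * a k + int m * a k) = (\<lambda>k. 0)" by (simp add: c)
  then have "\<psi> (\<lambda>k. c * a k) - of_int c * \<psi> a
      = \<psi> (\<lambda>k. 0) - (\<psi> (\<lambda>k. c * a k + int m * a k) - \<psi> (\<lambda>k. c * a k) - \<psi> (\<lambda>k. int m * a k))
        - (\<psi> (\<lambda>k. int m * a k) - of_nat m * \<psi> a)"
    by (simp add: c algebra_simps)
  also have "\<dots> \<in> V" by (intro diff_mem zero_vec additive lat_scale of_nat_scale a)
  finally show ?thesis .
qed

lemma linear_combination:
  assumes "finite K" and "\<And>m. m \<in> K \<Longrightarrow> a m \<in> lat n"
  shows "\<psi> (\<lambda>l. \<Sum>m\<in>K. c m * a m l) - (\<Sum>m\<in>K. of_int (c m) * \<psi> (a m)) \<in> V"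
  using assms
proof (induction K rule: finite_induct)
  case empty then show ?case using zero_vec by simp
next
  case (insert m K)
  let ?rest = "\<lambda>l. \<Sum>m\<in>K. c m * a m l"
  have "\<psi> (\<lambda>l. \<Sum>m\<in>insert m K. c m * a m l) - (\<Sum>m\<in>insert m K. of_int (c m) * \<psi> (a m))
      = (\<psi> (\<lambda>l. c m * a m l + ?rest l) - \<psi> (\<lambda>l. c m * a m l) - \<psi> ?rest)
        + (\<psi> (\<lambda>l. c m * a m l) - of_int (c m) * \<psi> (a m))
        + (\<psi> ?rest - (\<Sum>m\<in>K. of_int (c m) * \<psi> (a m)))"
    using insert.hyps by simp
  also have "\<dots> \<in> V"
    using insert.prems by (intro add_mem additive lat_scale lat_sum of_int_scale insert.IH) auto
  finally show ?case .
qed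

lemma expand_basis_vec:
  assumes "w \<in> lat n"
  shows "\<psi> w - (\<Sum>l<n. of_int (w l) * \<psi> (basis_vec l)) \<in> V"
  using linear_combination[of "{..<n}" basis_vec w] lat_eq_sum_basis_vec[OF assms] basis_vec_in_lat
  by simp

end

lemma additive_expand_basis_vec:
  fixes \<psi> :: "(nat \<Rightarrow> int) \<Rightarrow> 'b::comm_ring_1"
  assumes "\<And>u v. u \<in> lat n \<Longrightarrow> v \<in> lat n \<Longrightarrow> \<psi> (\<lambda>k. u k + v k) = \<psi> u + \<psi> v"
    and "w \<in> lat n"
  shows "\<psi> w = (\<Sum>l<n. of_int (w l) * \<psi> (basis_vec l))"
proof -
  interpret additive_modulo n \<psi> "{0}" by standard (simp_all add: assms(1))
  show ?thesis using expand_basis_vec[OF assms(2)] by simp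
qed

section \<open>Formal sums modulo the relations of the exterior power\<close>

lemma sum_fun_apply [simp]: "(\<Sum>k\<in>K. f k) u = (\<Sum>k\<in>K. f k u)"
  by (induction K rule: infinite_finite_induct) auto

lemma of_int_fun: "(of_int c :: 'a \<Rightarrow> 'b::ring_1) = (\<lambda>_. of_int c)"
  by (cases c rule: int_diff_cases) (simp add: of_nat_fun fun_eq_iff)

lemma rel_span_add: "x \<in> rel_span \<rho> n r \<Longrightarrow> y \<in> rel_span \<rho> n r \<Longrightarrow> x + y \<in> rel_span \<rho> n r"
  using rel_span.add[of x \<rho> n r y] by (simp add: plus_fun_def)

lemma rel_span_scale: "x \<in> rel_span \<rho> n r \<Longrightarrow> (\<lambda>_. c) * x \<in> rel_span \<rho> n r"
  using rel_span.smult[of x \<rho> n r c] by (simp add: times_fun_def)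

lemma rel_span_uminus: "x \<in> rel_span \<rho> n r \<Longrightarrow> - x \<in> rel_span \<rho> n r"
  using rel_span_scale[of x \<rho> n r "- 1"] by (simp add: times_fun_def fun_Compl_def)

lemma rel_span_diff: "x \<in> rel_span \<rho> n r \<Longrightarrow> y \<in> rel_span \<rho> n r \<Longrightarrow> x - y \<in> rel_span \<rho> n r"
  using rel_span_add[OF _ rel_span_uminus] by (metis diff_conv_add_uminus)

lemma rel_span_sum:
  "(\<And>k. k \<in> K \<Longrightarrow> f k \<in> rel_span \<rho> n r) \<Longrightarrow> (\<Sum>k\<in>K. f k) \<in> rel_span \<rho> n r"
  by (induction K rule: infinite_finite_induct)
    (auto intro: rel_span_add rel_span.zero simp: zero_fun_def)

lemma rel_span_slot_add:
  "t \<in> tuples n r \<Longrightarrow> i < r \<Longrightarrow> a \<in> lat n \<Longrightarrow> b \<in> lat n \<Longrightarrow>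
    delta (t[i := (\<lambda>k. a k + b k)]) - delta (t[i := a]) - delta (t[i := b]) \<in> rel_span \<rho> n r"
  by (rule rel_span.gen) (unfold rel_gens_def fun_diff_def, blast)

lemma rel_span_slot_act:
  "t \<in> tuples n r \<Longrightarrow> i < r \<Longrightarrow> j < r \<Longrightarrow>
    delta (t[i := act \<rho> n \<sigma> (t ! i)]) - delta (t[j := act \<rho> n \<sigma> (t ! j)]) \<in> rel_span \<rho> n r"
  by (rule rel_span.gen) (unfold rel_gens_def fun_diff_def, blast)

lemma rel_span_repeated:
  "t \<in> tuples n r \<Longrightarrow> i < j \<Longrightarrow> j < r \<Longrightarrow> t ! i = t ! j \<Longrightarrow> delta t \<in> rel_span \<rho> n r"
  by (rule rel_span.gen) (unfold rel_gens_def, blast)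

definition rel_equiv ::
    "('g \<Rightarrow> nat \<Rightarrow> nat \<Rightarrow> int) \<Rightarrow> nat \<Rightarrow> nat \<Rightarrow> ((nat \<Rightarrow> int) list \<Rightarrow> rat) \<Rightarrow> ((nat \<Rightarrow> int) list \<Rightarrow> rat) \<Rightarrow> bool" where
  "rel_equiv \<rho> n r x y \<longleftrightarrow> x - y \<in> rel_span \<rho> n r"

lemma rel_equiv_refl: "rel_equiv \<rho> n r x x"
  unfolding rel_equiv_def using rel_span.zero by (simp add: zero_fun_def)

lemma rel_equiv_sym: "rel_equiv \<rho> n r x y \<Longrightarrow> rel_equiv \<rho> n r y x"
  unfolding rel_equiv_def using rel_span_uminus by fastforce

lemma rel_equiv_trans [trans]:
  "rel_equiv \<rho> n r x y \<Longrightarrow> rel_equiv \<rho> n r y z \<Longrightarrow> rel_equiv \<rho> n r x z"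
  unfolding rel_equiv_def using rel_span_add by fastforce

lemma eq_rel_equiv_trans [trans]: "x = y \<Longrightarrow> rel_equiv \<rho> n r y z \<Longrightarrow> rel_equiv \<rho> n r x z"
  by simp

lemma rel_equiv_eq_trans [trans]: "rel_equiv \<rho> n r x y \<Longrightarrow> y = z \<Longrightarrow> rel_equiv \<rho> n r x z"
  by simp

lemma rel_equiv_scale: "rel_equiv \<rho> n r x y \<Longrightarrow> rel_equiv \<rho> n r ((\<lambda>_. c) * x) ((\<lambda>_. c) * y)"
  unfolding rel_equiv_def using rel_span_scale by (fastforce simp: right_diff_distrib)

lemma rel_equiv_sum:
  "(\<And>k. k \<in> K \<Longrightarrow> rel_equiv \<rho> n r (f k) (g k)) \<Longrightarrow> rel_equiv \<rho> n r (\<Sum>k\<in>K. f k) (\<Sum>k\<in>K. g k)"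
  unfolding rel_equiv_def using rel_span_sum[of K "\<lambda>k. f k - g k" \<rho> n r] by (simp add: sum_subtractf)

lemma rel_equiv_0_iff: "rel_equiv \<rho> n r x 0 \<longleftrightarrow> x \<in> rel_span \<rho> n r"
  unfolding rel_equiv_def by simp

lemma rel_equiv_slot_expand:
  assumes t: "t \<in> tuples n r" and i: "i < r" and v: "v \<in> lat n"
  shows "rel_equiv \<rho> n r (delta (t[i := v])) (\<Sum>k<n. (\<lambda>_. of_int (v k)) * delta (t[i := basis_vec k]))"
proof -
  interpret additive_modulo n "\<lambda>a. delta (t[i := a])" "rel_span \<rho> n r"
    by standard (auto intro: rel_span_add rel_span_uminus rel_span_slot_add[OF t i]
        rel_span.zero[unfolded zero_fun_def[symmetric]])
  show ?thesis unfolding rel_equiv_def using expand_basis_vec[OF v] by (simp add: of_int_fun)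
qed

definition index_lists :: "nat \<Rightarrow> nat \<Rightarrow> nat list set" where
  "index_lists n m = {is. length is = m \<and> set is \<subseteq> {..<n}}"

text \<open>The map \<open>Q\<close> of the proof idea is \<open>T \<mapsto> basis_combination n r (\<lambda>is. T is 0)\<close>.\<close>

definition basis_combination :: "nat \<Rightarrow> nat \<Rightarrow> (nat list \<Rightarrow> rat) \<Rightarrow> (nat \<Rightarrow> int) list \<Rightarrow> rat" where
  "basis_combination n r T = (\<Sum>is\<in>index_lists n r. (\<lambda>_. T is) * delta (map basis_vec is))"

lemma finite_index_lists [simp]: "finite (index_lists n m)"
  unfolding index_lists_def using finite_lists_length_eq[of "{..<n}" m] by (simp add: conj_commute)

lemma index_lists_0: "index_lists n 0 = {[]}"
  unfolding index_lists_def by auto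

lemma index_lists_length: "is \<in> index_lists n m \<Longrightarrow> length is = m"
  unfolding index_lists_def by auto

lemma index_lists_nth: "is \<in> index_lists n m \<Longrightarrow> j < m \<Longrightarrow> is ! j < n"
  unfolding index_lists_def using nth_mem by fastforce

lemma not_in_index_lists: "is \<notin> index_lists n r \<Longrightarrow> length is \<noteq> r \<or> (\<exists>i\<in>set is. n \<le> i)"
  unfolding index_lists_def by (force simp: subset_iff not_le)

lemma index_lists_update: "is \<in> index_lists n m \<Longrightarrow> k < n \<Longrightarrow> is[j := k] \<in> index_lists n m"
  unfolding index_lists_def by (auto dest: set_update_subset_insert[THEN subsetD])

lemma sum_index_lists_Suc:
  "(\<Sum>is\<in>index_lists n (Suc m). h is) = (\<Sum>is\<in>index_lists n m. \<Sum>k<n. h (is @ [k]))"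
proof -
  have "index_lists n (Suc m) = (\<lambda>(is, k). is @ [k]) ` (index_lists n m \<times> {..<n})"
  proof (rule equalityI; rule subsetI)
    fix x assume x: "x \<in> index_lists n (Suc m)"
    then obtain ys y where "x = ys @ [y]" unfolding index_lists_def by (cases x rule: rev_exhaust) auto
    with x show "x \<in> (\<lambda>(is, k). is @ [k]) ` (index_lists n m \<times> {..<n})" unfolding index_lists_def by auto
  qed (auto simp: index_lists_def)
  moreover have "inj_on (\<lambda>(is, k). is @ [k]) (index_lists n m \<times> {..<n})"
    by (auto intro!: inj_onI)
  ultimately show ?thesis by (simp add: sum.reindex sum.cartesian_product split_def)
qed

lemma prod_sum_eq_sum_index_lists:
  fixes g :: "nat \<Rightarrow> nat \<Rightarrow> 'a::comm_ring_1"
  shows "(\<Prod>i<r. \<Sum>l<n. g i l) = (\<Sum>ls\<in>index_lists n r. \<Prod>i<r. g i (ls ! i))"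
proof (induction r)
  case 0 then show ?case by (simp add: index_lists_0)
next
  case (Suc r)
  have "(\<Prod>i<Suc r. \<Sum>l<n. g i l) = (\<Sum>ls\<in>index_lists n r. \<Sum>l<n. (\<Prod>i<r. g i (ls ! i)) * g r l)"
    by (simp add: Suc prod.lessThan_Suc sum_distrib_left sum_distrib_right) (rule sum.swap)
  also have "\<dots> = (\<Sum>ls\<in>index_lists n r. \<Sum>l<n. \<Prod>i<Suc r. g i ((ls @ [l]) ! i))"
    by (intro sum.cong refl) (auto simp: prod.lessThan_Suc nth_append index_lists_length intro!: prod.cong)
  finally show ?case by (simp add: sum_index_lists_Suc)
qed

lemma rel_equiv_expand_prefix:
  assumes t: "t \<in> tuples n r" and m: "m \<le> r"
  shows "rel_equiv \<rho> n r (delta t)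
    (\<Sum>is\<in>index_lists n m. (\<lambda>_. of_int (\<Prod>j<m. (t ! j) (is ! j))) * delta (map basis_vec is @ drop m t))"
  using m
proof (induction m)
  case 0
  show ?case by (simp add: index_lists_0 rel_equiv_refl times_fun_def)
next
  case (Suc m)
  then have m: "m < r" by simp
  let ?c = "\<lambda>is. (\<lambda>_. of_int (\<Prod>j<m. (t ! j) (is ! j))) :: (nat \<Rightarrow> int) list \<Rightarrow> rat"
  have drop: "drop m t = t ! m # drop (Suc m) t"
    using m tuples_length[OF t] by (simp add: Cons_nth_drop_Suc)
  have "rel_equiv \<rho> n r (delta (map basis_vec is @ drop m t))
      (\<Sum>k<n. (\<lambda>_. of_int ((t ! m) k)) * delta (map basis_vec (is @ [k]) @ drop (Suc m) t))"
    if "is": "is \<in> index_lists n m" for "is"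
  proof -
    let ?u = "map basis_vec is @ drop m t"
    have u: "?u \<in> tuples n r" using "is" t m tuples_length[OF t] unfolding tuples_def index_lists_def
      by (auto simp: basis_vec_in_lat dest: in_set_dropD)
    have "?u ! m = t ! m" "?u[m := basis_vec k] = map basis_vec (is @ [k]) @ drop (Suc m) t" for k
      using "is" drop by (simp_all add: index_lists_length nth_append list_update_append)
    then show ?thesis
      using rel_equiv_slot_expand[OF u m tuples_nth[OF t m]] list_update_id[of ?u m] by simp
  qed
  then have "rel_equiv \<rho> n r (\<Sum>is\<in>index_lists n m. ?c is * delta (map basis_vec is @ drop m t))
      (\<Sum>is\<in>index_lists n m. ?c is * (\<Sum>k<n. (\<lambda>_. of_int ((t ! m) k)) * delta (map basis_vec (is @ [k]) @ drop (Suc m) t)))"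
    by (intro rel_equiv_sum rel_equiv_scale)
  then have "rel_equiv \<rho> n r (delta t)
      (\<Sum>is\<in>index_lists n m. ?c is * (\<Sum>k<n. (\<lambda>_. of_int ((t ! m) k)) * delta (map basis_vec (is @ [k]) @ drop (Suc m) t)))"
    by (rule rel_equiv_trans[OF Suc.IH[OF less_imp_le[OF m]]])
  also have "\<dots> = (\<Sum>is\<in>index_lists n (Suc m).
      (\<lambda>_. of_int (\<Prod>j<Suc m. (t ! j) (is ! j))) * delta (map basis_vec is @ drop (Suc m) t))"
    unfolding sum_index_lists_Suc
    by (intro sum.cong refl)
       (auto simp: fun_eq_iff sum_distrib_left prod.lessThan_Suc nth_append index_lists_length intro!: sum.cong prod.cong)
  finally show ?case .
qed

lemma rel_equiv_expand:
  "t \<in> tuples n r \<Longrightarrow>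
    rel_equiv \<rho> n r (delta t) (basis_combination n r (\<lambda>is. of_int (\<Prod>j<r. (t ! j) (is ! j))))"
  using rel_equiv_expand_prefix[of t n r r] tuples_length[of t n r] by (simp add: basis_combination_def)

lemma rel_equiv_balance:
  assumes R: "is_lattice_rep n \<rho>" and t: "t \<in> tuples n r" and r: "r \<ge> 1"
  shows "rel_equiv \<rho> n r (delta (map (\<lambda>j. act \<rho> n (a j) (t ! j)) [0..<r]))
    (delta (t[0 := act \<rho> n (\<Sum>j<r. a j) (t ! 0)]))"
proof -
  define W where "W m = map (\<lambda>j. if j = 0 then act \<rho> n (\<Sum>l<m. a l) (t ! 0)
    else if j < m then t ! j else act \<rho> n (a j) (t ! j)) [0..<r]" for m
  have W_tuples: "W m \<in> tuples n r" for m
    unfolding W_def tuples_def using tuples_nth[OF t] by auto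
  have step: "rel_equiv \<rho> n r (delta (W m)) (delta (W (Suc m)))" if m: "1 \<le> m" "m < r" for m
  proof -
    define W' where "W' = (W m)[m := t ! m]"
    have W': "W' \<in> tuples n r" unfolding W'_def by (rule tuples_update[OF W_tuples tuples_nth[OF t m(2)]])
    have "act \<rho> n (a m) (act \<rho> n (\<Sum>l<m. a l) (t ! 0)) = act \<rho> n (\<Sum>l<Suc m. a l) (t ! 0)"
      using act_act[OF R tuples_nth[OF t], of 0] r by (simp add: add.commute)
    then have "W m = W'[m := act \<rho> n (a m) (W' ! m)]" "W (Suc m) = W'[0 := act \<rho> n (a m) (W' ! 0)]"
      unfolding W'_def W_def using m by (auto intro!: nth_equalityI simp: nth_list_update)
    then show ?thesis
      unfolding rel_equiv_def using rel_span_slot_act[OF W' m(2), where j=0 and \<sigma>="a m"] r by simp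
  qed
  have chain: "rel_equiv \<rho> n r (delta (W 1)) (delta (W m))" if "1 \<le> m" "m \<le> r" for m
    using that
  proof (induction m rule: nat_induct_at_least)
    case base show ?case by (rule rel_equiv_refl)
  next
    case (Suc m)
    then show ?case using step[of m] rel_equiv_trans by simp
  qed
  have "W 1 = map (\<lambda>j. act \<rho> n (a j) (t ! j)) [0..<r]"
    unfolding W_def by (intro map_cong) auto
  moreover have "W r = t[0 := act \<rho> n (\<Sum>j<r. a j) (t ! 0)]"
    unfolding W_def using tuples_length[OF t] r by (intro nth_equalityI) auto
  ultimately show ?thesis using chain[of r] r by simp
qed

lemma rel_equiv_swap:
  assumes t: "t \<in> tuples n r" and ab: "a < r" "b < r" "a \<noteq> b"
  shows "rel_equiv \<rho> n r (delta (t[a := t ! b, b := t ! a])) (- delta t)"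
proof -
  let ?x = "t ! a" and ?y = "t ! b" and ?s = "\<lambda>k. (t ! a) k + (t ! b) k"
  define D where "D p q = delta (t[a := p, b := q])" for p q
  have x: "?x \<in> lat n" and y: "?y \<in> lat n" using tuples_nth[OF t] ab by auto
  have s: "?s \<in> lat n" by (rule lat_add[OF x y])
  have D_tuples: "t[a := p, b := q] \<in> tuples n r" if "p \<in> lat n" "q \<in> lat n" for p q
    by (intro tuples_update t that)
  have diag: "D p p \<in> rel_span \<rho> n r" if "p \<in> lat n" for p
  proof (cases "a < b")
    case True
    then show ?thesis unfolding D_def
      using rel_span_repeated[OF D_tuples[OF that that] True ab(2)] ab tuples_length[OF t] by simp
  next
    case False
    then have "b < a" using ab by simp
    then show ?thesis unfolding D_def
      using rel_span_repeated[OF D_tuples[OF that that] \<open>b < a\<close> ab(1)] ab tuples_length[OF t] by simp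
  qed
  have first: "D ?s q - D ?x q - D ?y q \<in> rel_span \<rho> n r" if "q \<in> lat n" for q
  proof -
    have "t[b := q, a := p] = t[a := p, b := q]" for p using ab(3) by (simp add: list_update_swap)
    then show ?thesis
      unfolding D_def using rel_span_slot_add[OF tuples_update[OF t that, of b] ab(1) x y, where \<rho>=\<rho>] by simp
  qed
  have second: "D p ?s - D p ?x - D p ?y \<in> rel_span \<rho> n r" if "p \<in> lat n" for p
    using rel_span_slot_add[OF D_tuples[OF that x] ab(2) x y] ab tuples_length[OF t]
    by (simp add: D_def)
  have "D ?x ?y + D ?y ?x = D ?s ?s - (D ?s ?s - D ?x ?s - D ?y ?s) - (D ?x ?s - D ?x ?x - D ?x ?y)
      - (D ?y ?s - D ?y ?x - D ?y ?y) - D ?x ?x - D ?y ?y"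
    by (simp add: algebra_simps)
  also have "\<dots> \<in> rel_span \<rho> n r"
    by (intro rel_span_diff diag first second x y s)
  finally show ?thesis
    unfolding rel_equiv_def D_def using ab tuples_length[OF t] by (simp add: list_update_swap add.commute)
qed

lemma rel_equiv_permute:
  assumes "f permutes {..<r}"
  shows "\<forall>t\<in>tuples n r. rel_equiv \<rho> n r (delta (map (\<lambda>j. t ! f j) [0..<r])) ((\<lambda>_. of_int (sign f)) * delta t)"
  using assms finite_lessThan[of r]
proof (induction f rule: permutes_induct)
  case id
  have "map (\<lambda>j. t ! j) [0..<r] = t" if "t \<in> tuples n r" for t
    using map_nth[of t] tuples_length[OF that] by simp
  then show ?case by (simp add: times_fun_def rel_equiv_refl)
next
  case (swap a b p)
  have ab: "a < r" "b < r" "a \<noteq> b" and p: "p permutes {..<r}" using swap.hyps by auto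
  show ?case
  proof
    fix t assume t: "t \<in> tuples n r"
    let ?t' = "t[a := t ! b, b := t ! a]"
    have t': "?t' \<in> tuples n r" by (intro tuples_update t tuples_nth[OF t] ab)
    have "map (\<lambda>j. t ! (Transposition.transpose a b \<circ> p) j) [0..<r] = map (\<lambda>j. ?t' ! p j) [0..<r]"
      using ab permutes_lessThanD(3)[OF p] tuples_length[OF t]
      by (auto simp: Transposition.transpose_def nth_list_update)
    moreover have "rel_equiv \<rho> n r (delta (map (\<lambda>j. ?t' ! p j) [0..<r])) ((\<lambda>_. of_int (sign p)) * delta ?t')"
      using swap.IH t' by blast
    also have "rel_equiv \<rho> n r \<dots> ((\<lambda>_. of_int (sign p)) * (- delta t))"
      by (intro rel_equiv_scale rel_equiv_swap t ab)
    also have "\<dots> = (\<lambda>_. of_int (sign (Transposition.transpose a b \<circ> p))) * delta t"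
      using ab by (simp add: fun_eq_iff sign_swap_id
          sign_compose[OF permutation_swap_id permutation_of_permutes_lessThan[OF p]])
    ultimately show "rel_equiv \<rho> n r (delta (map (\<lambda>j. t ! (Transposition.transpose a b \<circ> p) j) [0..<r]))
        ((\<lambda>_. of_int (sign (Transposition.transpose a b \<circ> p))) * delta t)"
      by simp
  qed
qed

section \<open>\<open>P\<close> on formal sums: compatibility with the relations and injectivity\<close>

lemma P_map_eq_sum:
  assumes "finite A" "{t. x t \<noteq> 0} \<subseteq> A"
  shows "P_map \<rho> n r x is \<tau> = (\<Sum>t\<in>A. x t * P_tuple \<rho> n r t is \<tau>)"
  unfolding P_map_def using assms by (intro sum.mono_neutral_left) auto

lemma P_map_delta: "P_map \<rho> n r (delta t) is \<tau> = P_tuple \<rho> n r t is \<tau>"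
  by (subst P_map_eq_sum[of "{t}"]) (auto simp: delta_def)

lemma P_map_add:
  assumes "finite {t. x t \<noteq> 0}" "finite {t. y t \<noteq> 0}"
  shows "P_map \<rho> n r (x + y) is \<tau> = P_map \<rho> n r x is \<tau> + P_map \<rho> n r y is \<tau>"
proof -
  let ?A = "{t. x t \<noteq> 0} \<union> {t. y t \<noteq> 0}"
  have "finite ?A" using assms by simp
  then show ?thesis by (subst (1 2 3) P_map_eq_sum[of ?A]) (auto simp: distrib_right sum.distrib)
qed

lemma P_map_scale: "P_map \<rho> n r ((\<lambda>_. c) * x) is \<tau> = c * P_map \<rho> n r x is \<tau>"
  unfolding P_map_def by (cases "c = 0") (simp_all add: sum_distrib_left mult.assoc)

lemma P_map_diff:
  assumes "finite {t. x t \<noteq> 0}" "finite {t. y t \<noteq> 0}"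
  shows "P_map \<rho> n r (x - y) is \<tau> = P_map \<rho> n r x is \<tau> - P_map \<rho> n r y is \<tau>"
proof -
  have "x - y = x + (\<lambda>_. - 1) * y" by (rule ext) simp
  then have "P_map \<rho> n r (x - y) is \<tau> = P_map \<rho> n r (x + (\<lambda>_. - 1) * y) is \<tau>"
    by (simp only:)
  also have "\<dots> = P_map \<rho> n r x is \<tau> + P_map \<rho> n r ((\<lambda>_. - 1) * y) is \<tau>"
    using assms by (intro P_map_add) auto
  finally show ?thesis by (simp add: P_map_scale)
qed

lemma finite_support_delta [simp]: "finite {u. delta t u \<noteq> 0}"
  by (rule finite_subset[of _ "{t}"]) (auto simp: delta_def)

lemma finite_support_diff:
  fixes x y :: "'a \<Rightarrow> 'b::ab_group_add"
  shows "finite {t. x t \<noteq> 0} \<Longrightarrow> finite {t. y t \<noteq> 0} \<Longrightarrow> finite {t. (x - y) t \<noteq> 0}"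
  by (rule finite_subset[of _ "{t. x t \<noteq> 0} \<union> {t. y t \<noteq> 0}"]) auto

lemma rel_gensE:
  assumes "g \<in> rel_gens \<rho> n r"
  obtains (slot_add) t i a b where
      "g = delta (t[i := (\<lambda>k. a k + b k)]) - delta (t[i := a]) - delta (t[i := b])"
      "t \<in> tuples n r" "i < r"
  | (slot_act) t i j \<sigma> where
      "g = delta (t[i := act \<rho> n \<sigma> (t ! i)]) - delta (t[j := act \<rho> n \<sigma> (t ! j)])"
      "t \<in> tuples n r" "i < r" "j < r"
  | (repeated) t i j where "g = delta t" "i < j" "j < r" "t ! i = t ! j"
  using assms unfolding rel_gens_def fun_diff_def by blast

lemma finite_support_rel_span: "x \<in> rel_span \<rho> n r \<Longrightarrow> finite {t. x t \<noteq> 0}"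
proof (induction rule: rel_span.induct)
  case (gen g)
  then show ?case by (cases rule: rel_gensE) (simp_all only: finite_support_diff finite_support_delta)
next
  case (add x y)
  have "{t. x t + y t \<noteq> 0} \<subseteq> {t. x t \<noteq> 0} \<union> {t. y t \<noteq> 0}" by auto
  then show ?case using add.IH by (auto intro: finite_subset)
qed (auto elim!: finite_subset[rotated])

lemma P_map_rel_gens:
  assumes R: "is_lattice_rep n \<rho>" and g: "g \<in> rel_gens \<rho> n r"
  shows "P_map \<rho> n r g is \<tau> = 0"
  using g
proof (cases rule: rel_gensE)
  case (slot_add t i a b)
  then show ?thesis
    by (simp only: P_map_diff finite_support_diff finite_support_delta P_map_delta P_tuple_update_add)
next
  case (slot_act t i j \<sigma>)
  then show ?thesis
    by (simp only: P_map_diff finite_support_delta P_map_delta P_tuple_update_act[OF R])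
next
  case (repeated t i j)
  then show ?thesis by (simp add: P_map_delta P_tuple_repeated)
qed

lemma P_map_rel_span:
  assumes R: "is_lattice_rep n \<rho>"
  shows "x \<in> rel_span \<rho> n r \<Longrightarrow> P_map \<rho> n r x = (\<lambda>_ _. 0)"
proof (induction rule: rel_span.induct)
  case zero
  show ?case unfolding P_map_def by simp
next
  case (gen g)
  then show ?case using P_map_rel_gens[OF R] by blast
next
  case (add x y)
  have "P_map \<rho> n r (x + y) is \<tau> = P_map \<rho> n r x is \<tau> + P_map \<rho> n r y is \<tau>" for "is" \<tau>
    using finite_support_rel_span[OF add.hyps(1)] finite_support_rel_span[OF add.hyps(2)] by (rule P_map_add)
  then show ?case using add.IH by (simp add: plus_fun_def)
next
  case (smult x c)
  then show ?case using P_map_scale[of \<rho> n r c x] by (simp add: times_fun_def fun_eq_iff)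
qed

definition P_norm_factor :: "nat \<Rightarrow> 'g itself \<Rightarrow> rat" where
  "P_norm_factor r (_ :: 'g itself) = of_nat (fact r * card (UNIV :: 'g set) ^ (r - 1))"

lemma P_norm_factor_nonzero: "P_norm_factor r TYPE('g::finite) \<noteq> 0"
  unfolding P_norm_factor_def by simp

lemma sum_signs_sum_fiber:
  assumes "r \<ge> 1"
  shows "(\<Sum>f | f permutes {..<r}. of_int (sign f)
      * (\<Sum>s\<in>sum_fiber r (\<tau>::'g::{ab_group_add,finite}). of_int (sign f) * c))
    = P_norm_factor r TYPE('g) * (c :: rat)"
proof -
  have each: "of_int (sign f) * (\<Sum>s\<in>sum_fiber r \<tau>. of_int (sign f) * c) = of_nat (card (sum_fiber r \<tau>)) * c"
    for f :: "nat \<Rightarrow> nat"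
    by (simp add: mult.left_commute[of "of_int (sign f)"] sign_mult_sign)
  have "(\<Sum>f | f permutes {..<r}. of_int (sign f) * (\<Sum>s\<in>sum_fiber r \<tau>. of_int (sign f) * c))
      = (\<Sum>f | f permutes {..<r}. of_nat (card (sum_fiber r \<tau>)) * c)"
    by (intro sum.cong refl each)
  also have "\<dots> = P_norm_factor r TYPE('g) * c"
    using card_sum_fiber[OF assms, of \<tau>] card_permutations[of "{..<r}" r]
    by (simp add: P_norm_factor_def)
  finally show ?thesis .
qed

lemma basis_combination_P_tuple:
  "basis_combination n r (\<lambda>is. P_tuple \<rho> n r t is \<tau>)
    = (\<Sum>f | f permutes {..<r}. (\<lambda>_. of_int (sign f)) * (\<Sum>s\<in>sum_fiber r \<tau>.
        basis_combination n r (\<lambda>is. of_int (\<Prod>j<r. (map (\<lambda>j. act \<rho> n (- s j) (t ! f j)) [0..<r] ! j) (is ! j)))))"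
proof (rule ext)
  fix u
  have "P_tuple \<rho> n r t is \<tau> = (\<Sum>f | f permutes {..<r}. of_int (sign f) * (\<Sum>s\<in>sum_fiber r \<tau>.
      of_int (\<Prod>j<r. (map (\<lambda>j. act \<rho> n (- s j) (t ! f j)) [0..<r] ! j) (is ! j))))"
    if "is \<in> index_lists n r" for "is"
    using that unfolding P_tuple_def sum_fiber_def by (simp add: index_lists_length of_int_prod)
  then show "basis_combination n r (\<lambda>is. P_tuple \<rho> n r t is \<tau>) u = (\<Sum>f | f permutes {..<r}.
      (\<lambda>_. of_int (sign f)) * (\<Sum>s\<in>sum_fiber r \<tau>. basis_combination n r
        (\<lambda>is. of_int (\<Prod>j<r. (map (\<lambda>j. act \<rho> n (- s j) (t ! f j)) [0..<r] ! j) (is ! j))))) u"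
    unfolding basis_combination_def
    by (simp add: sum_distrib_left sum_distrib_right mult.assoc sum.swap[where A="index_lists n r"])
qed

lemma basis_combination_P_tuple_rel_equiv:
  fixes \<rho> :: "'g::{ab_group_add,finite} \<Rightarrow> nat \<Rightarrow> nat \<Rightarrow> int"
  assumes R: "is_lattice_rep n \<rho>" and t: "t \<in> tuples n r" and r: "r \<ge> 1"
  shows "rel_equiv \<rho> n r (basis_combination n r (\<lambda>is. P_tuple \<rho> n r t is 0))
    ((\<lambda>_. P_norm_factor r TYPE('g)) * delta t)"
proof -
  let ?S = "sum_fiber r (0::'g)" and ?sign = "\<lambda>f. (\<lambda>_. of_int (sign f)) :: (nat \<Rightarrow> int) list \<Rightarrow> rat"
  define u where "u f s = map (\<lambda>j. act \<rho> n (- s j) (t ! f j)) [0..<r]" for f and s :: "nat \<Rightarrow> 'g"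
  define v where "v f = map (\<lambda>j. t ! f j) [0..<r]" for f
  have v: "v f \<in> tuples n r" if "f permutes {..<r}" for f
    unfolding v_def tuples_def using tuples_nth[OF t] permutes_lessThanD(3)[OF that] by fastforce
  have balance: "rel_equiv \<rho> n r (delta (u f s)) (delta (v f))" if f: "f permutes {..<r}" and s: "s \<in> ?S" for f s
  proof -
    have "(\<Sum>j<r. - s j) = 0" using s unfolding sum_fiber_def by (simp add: sum_negf)
    moreover have "v f ! 0 \<in> lat n" using tuples_nth[OF v[OF f]] r by simp
    ultimately have "(v f)[0 := act \<rho> n (\<Sum>j<r. - s j) (v f ! 0)] = v f" using act_zero[OF R] by simp
    moreover have "u f s = map (\<lambda>j. act \<rho> n (- s j) (v f ! j)) [0..<r]" unfolding u_def v_def by simp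
    ultimately show ?thesis using rel_equiv_balance[OF R v[OF f] r, of "\<lambda>j. - s j"] by simp
  qed
  have "basis_combination n r (\<lambda>is. P_tuple \<rho> n r t is 0) = (\<Sum>f | f permutes {..<r}. ?sign f *
      (\<Sum>s\<in>?S. basis_combination n r (\<lambda>is. of_int (\<Prod>j<r. (u f s ! j) (is ! j)))))"
    unfolding basis_combination_P_tuple u_def ..
  also have "rel_equiv \<rho> n r \<dots> (\<Sum>f | f permutes {..<r}. ?sign f * (\<Sum>s\<in>?S. delta (u f s)))"
    unfolding u_def
    by (intro rel_equiv_sum rel_equiv_scale rel_equiv_sym[OF rel_equiv_expand])
       (auto simp: tuples_def)
  also have "rel_equiv \<rho> n r \<dots> (\<Sum>f | f permutes {..<r}. ?sign f * (\<Sum>s\<in>?S. delta (v f)))"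
    by (intro rel_equiv_sum rel_equiv_scale balance) auto
  also have "rel_equiv \<rho> n r \<dots> (\<Sum>f | f permutes {..<r}. ?sign f * (\<Sum>s\<in>?S. ?sign f * delta t))"
    unfolding v_def by (intro rel_equiv_sum rel_equiv_scale) (auto intro: rel_equiv_permute[THEN bspec] t)
  also have "\<dots> = (\<lambda>_. P_norm_factor r TYPE('g)) * delta t"
  proof (rule ext)
    fix w
    show "(\<Sum>f | f permutes {..<r}. ?sign f * (\<Sum>s\<in>?S. ?sign f * delta t)) w
        = ((\<lambda>_. P_norm_factor r TYPE('g)) * delta t) w"
      using sum_signs_sum_fiber[OF r, where \<tau>="0::'g" and c="delta t w"] by simp
  qed
  finally show ?thesis .
qed

lemma rel_span_if_P_map_eq_0:
  fixes \<rho> :: "'g::{ab_group_add,finite} \<Rightarrow> nat \<Rightarrow> nat \<Rightarrow> int"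
  assumes R: "is_lattice_rep n \<rho>" and r: "r \<ge> 1" and x: "x \<in> formal n r"
    and P0: "P_map \<rho> n r x = (\<lambda>_ _. 0)"
  shows "x \<in> rel_span \<rho> n r"
proof -
  let ?A = "{t. x t \<noteq> 0}" and ?c = "P_norm_factor r TYPE('g)"
  have A: "finite ?A" "?A \<subseteq> tuples n r" using x unfolding formal_def by auto
  have "0 = basis_combination n r (\<lambda>is. P_map \<rho> n r x is 0)"
    unfolding P0 basis_combination_def by (simp add: fun_eq_iff)
  also have "\<dots> = (\<Sum>t\<in>?A. (\<lambda>_. x t) * basis_combination n r (\<lambda>is. P_tuple \<rho> n r t is 0))"
    unfolding basis_combination_def P_map_def
    by (rule ext) (simp add: sum_distrib_right sum_distrib_left mult.assoc sum.swap[where A="?A"])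
  also have "rel_equiv \<rho> n r \<dots> (\<Sum>t\<in>?A. (\<lambda>_. x t) * ((\<lambda>_. ?c) * delta t))"
    using A by (intro rel_equiv_sum rel_equiv_scale basis_combination_P_tuple_rel_equiv[OF R _ r]) auto
  also have "\<dots> = (\<lambda>_. ?c) * x"
  proof (rule ext)
    fix u
    have "(\<Sum>t\<in>?A. x t * (?c * delta t u)) = x u * ?c"
      using A(1) by (cases "x u = 0") (simp_all add: delta_def if_distrib sum.delta cong: if_cong)
    then show "(\<Sum>t\<in>?A. (\<lambda>_. x t) * ((\<lambda>_. ?c) * delta t)) u = ((\<lambda>_. ?c) * x) u" by simp
  qed
  finally have "(\<lambda>_. ?c) * x \<in> rel_span \<rho> n r"
    using rel_equiv_sym rel_equiv_0_iff by metis
  then have "(\<lambda>_. 1 / ?c) * ((\<lambda>_. ?c) * x) \<in> rel_span \<rho> n r" by (rule rel_span_scale)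
  then show ?thesis using P_norm_factor_nonzero[where 'g='g] by (simp add: times_fun_def)
qed

section \<open>Homomorphisms \<open>M \<rightarrow> \<int>[G]\<close> and the coordinates of \<open>P\<close>\<close>

lemma lookup_single_mult:
  fixes X :: "'g::{ab_group_add,finite} \<Rightarrow>\<^sub>0 'a::comm_ring_1"
  shows "Poly_Mapping.lookup (Poly_Mapping.single a c * X) k = c * Poly_Mapping.lookup X (k - a)"
proof -
  have "Poly_Mapping.lookup (Poly_Mapping.single a c * X) k
      = (\<Sum>l\<in>UNIV. if l = k - a then c * Poly_Mapping.lookup X l else 0)"
    unfolding lookup_mult_finite by (intro sum.cong) (auto simp: lookup_single when_def)
  then show ?thesis by (simp add: sum.delta')
qed

lemma lookup_map_of_int:
  "Poly_Mapping.lookup (Poly_Mapping.map (of_int :: int \<Rightarrow> rat) D) k = of_int (Poly_Mapping.lookup D k)"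
  by (simp add: Poly_Mapping.map.rep_eq when_def)

lemma in_range_map_of_int:
  fixes w :: "'g::finite \<Rightarrow>\<^sub>0 rat"
  assumes "\<And>k. Poly_Mapping.lookup w k \<in> \<int>"
  shows "w \<in> range (Poly_Mapping.map (of_int :: int \<Rightarrow> rat))"
proof
  let ?y = "\<Sum>\<sigma>\<in>UNIV. Poly_Mapping.single \<sigma> \<lfloor>Poly_Mapping.lookup w \<sigma>\<rfloor>"
  show "w = Poly_Mapping.map of_int ?y"
  proof (rule poly_mapping_eqI)
    fix k
    from assms[of k] obtain z where "Poly_Mapping.lookup w k = of_int z" by (auto elim: Ints_cases)
    then show "Poly_Mapping.lookup w k = Poly_Mapping.lookup (Poly_Mapping.map of_int ?y) k"
      by (simp add: lookup_map_of_int lookup_sum lookup_single when_def)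
  qed
qed simp

definition coord_hom :: "('g::{ab_group_add,finite} \<Rightarrow> nat \<Rightarrow> nat \<Rightarrow> int) \<Rightarrow> nat \<Rightarrow> nat \<Rightarrow> (nat \<Rightarrow> int) \<Rightarrow> ('g \<Rightarrow>\<^sub>0 int)" where
  "coord_hom \<rho> n k v = (\<Sum>\<sigma>\<in>UNIV. Poly_Mapping.single \<sigma> (act \<rho> n (- \<sigma>) v k))"

lemma lookup_coord_hom: "Poly_Mapping.lookup (coord_hom \<rho> n k v) \<tau> = act \<rho> n (- \<tau>) v k"
  unfolding coord_hom_def lookup_sum by (simp add: lookup_single when_def)

lemma is_hom_coord_hom:
  assumes R: "is_lattice_rep n \<rho>"
  shows "is_hom \<rho> n (coord_hom \<rho> n k)"
  unfolding is_hom_def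
proof (intro conjI ballI allI)
  fix u v
  show "coord_hom \<rho> n k (\<lambda>k. u k + v k) = coord_hom \<rho> n k u + coord_hom \<rho> n k v"
    by (rule poly_mapping_eqI) (simp add: lookup_coord_hom lookup_add act_add)
next
  fix \<sigma> u assume u: "u \<in> lat n"
  show "coord_hom \<rho> n k (act \<rho> n \<sigma> u) = Poly_Mapping.single \<sigma> 1 * coord_hom \<rho> n k u"
    by (rule poly_mapping_eqI) (simp add: lookup_coord_hom lookup_single_mult act_act[OF R u] algebra_simps)
qed

lemma lookup_hom_expand:
  fixes \<rho> :: "'g::{ab_group_add,finite} \<Rightarrow> nat \<Rightarrow> nat \<Rightarrow> int"
  assumes h: "is_hom \<rho> n \<phi>" and v: "v \<in> lat n"
  shows "Poly_Mapping.lookup (\<phi> v) \<sigma>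
    = (\<Sum>l<n. act \<rho> n (- \<sigma>) v l * Poly_Mapping.lookup (\<phi> (basis_vec l)) 0)"
proof -
  have "\<phi> (act \<rho> n (- \<sigma>) v) = Poly_Mapping.single (- \<sigma>) 1 * \<phi> v"
    using h v unfolding is_hom_def by blast
  moreover have "Poly_Mapping.lookup (Poly_Mapping.single (- \<sigma>) 1 * \<phi> v) 0 = Poly_Mapping.lookup (\<phi> v) \<sigma>"
    by (simp only: lookup_single_mult) simp
  ultimately have "Poly_Mapping.lookup (\<phi> v) \<sigma> = Poly_Mapping.lookup (\<phi> (act \<rho> n (- \<sigma>) v)) 0"
    by simp
  also have "\<dots> = (\<Sum>l<n. act \<rho> n (- \<sigma>) v l * Poly_Mapping.lookup (\<phi> (basis_vec l)) 0)"
    using h by (subst additive_expand_basis_vec[of n "\<lambda>w. Poly_Mapping.lookup (\<phi> w) 0"])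
      (auto simp: is_hom_def lookup_add)
  finally show ?thesis .
qed

lemma convolution_expand_sum:
  fixes H :: "nat \<Rightarrow> nat \<Rightarrow> 'g::{ab_group_add,finite} \<Rightarrow> 'a::comm_ring_1"
  shows "convolution r (\<lambda>i \<sigma>. \<Sum>l<n. c i l * H i l \<sigma>) \<tau>
    = (\<Sum>ls\<in>index_lists n r. (\<Prod>i<r. c i (ls ! i)) * convolution r (\<lambda>i. H i (ls ! i)) \<tau>)"
proof -
  have "convolution r (\<lambda>i \<sigma>. \<Sum>l<n. c i l * H i l \<sigma>) \<tau>
      = (\<Sum>s\<in>sum_fiber r \<tau>. \<Sum>ls\<in>index_lists n r. (\<Prod>i<r. c i (ls ! i)) * (\<Prod>i<r. H i (ls ! i) (s i)))"
    unfolding convolution_def by (simp add: prod_sum_eq_sum_index_lists prod.distrib)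
  then show ?thesis unfolding convolution_def by (simp add: sum_distrib_left sum.swap[of _ "sum_fiber r \<tau>"])
qed

lemma lookup_det:
  fixes \<phi>s :: "nat \<Rightarrow> (nat \<Rightarrow> int) \<Rightarrow> ('g::{ab_group_add,finite} \<Rightarrow>\<^sub>0 int)"
  shows "(of_int (Poly_Mapping.lookup (det (mat r r (\<lambda>(i, j). \<phi>s i (t ! j)))) \<tau>) :: rat)
    = (\<Sum>p | p permutes {..<r}. of_int (sign p)
        * convolution r (\<lambda>i \<sigma>. of_int (Poly_Mapping.lookup (\<phi>s i (t ! p i)) \<sigma>)) \<tau>)"
proof -
  have "det (mat r r (\<lambda>(i, j). \<phi>s i (t ! j)))
      = (\<Sum>p | p permutes {..<r}. of_int (sign p) * (\<Prod>i<r. \<phi>s i (t ! p i)))"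
    unfolding det_def' [of "mat r r (\<lambda>(i, j). \<phi>s i (t ! j))" r, OF mat_carrier]
    by (intro sum.cong) (auto simp: atLeast0LessThan permutes_lessThanD intro!: prod.cong)
  then show ?thesis
    by (simp add: lookup_sum lookup_single_mult lookup_prod_convolution convolution_def of_int_sum of_int_prod
        flip: single_of_int)
qed

lemma lookup_det_hom:
  fixes \<phi>s :: "nat \<Rightarrow> (nat \<Rightarrow> int) \<Rightarrow> ('g::{ab_group_add,finite} \<Rightarrow>\<^sub>0 int)"
  assumes h: "\<And>i. i < r \<Longrightarrow> is_hom \<rho> n (\<phi>s i)" and t: "t \<in> tuples n r"
  shows "(of_int (Poly_Mapping.lookup (det (mat r r (\<lambda>(i, j). \<phi>s i (t ! j)))) \<tau>) :: rat)
    = (\<Sum>ls\<in>index_lists n r. of_int (\<Prod>i<r. Poly_Mapping.lookup (\<phi>s i (basis_vec (ls ! i))) 0)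
        * P_tuple \<rho> n r t ls \<tau>)"
proof -
  let ?c = "\<lambda>i l. (of_int (Poly_Mapping.lookup (\<phi>s i (basis_vec l)) 0) :: rat)"
  have "(of_int (Poly_Mapping.lookup (det (mat r r (\<lambda>(i, j). \<phi>s i (t ! j)))) \<tau>) :: rat)
      = (\<Sum>p | p permutes {..<r}. of_int (sign p)
          * convolution r (\<lambda>i \<sigma>. \<Sum>l<n. ?c i l * of_int (act \<rho> n (- \<sigma>) (t ! p i) l)) \<tau>)"
    unfolding lookup_det
  proof (intro sum.cong refl arg_cong[where f="\<lambda>x. _ * x"] convolution_cong)
    fix p i \<sigma> assume "p \<in> {p. p permutes {..<r}}" and i: "i < r"
    then have "t ! p i \<in> lat n" using tuples_nth[OF t] permutes_lessThanD(3) by blast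
    then show "of_int (Poly_Mapping.lookup (\<phi>s i (t ! p i)) \<sigma>)
        = (\<Sum>l<n. ?c i l * of_int (act \<rho> n (- \<sigma>) (t ! p i) l))"
      using lookup_hom_expand[OF h[OF i]] by (simp add: of_int_sum mult.commute)
  qed
  also have "\<dots> = (\<Sum>p | p permutes {..<r}. of_int (sign p) * (\<Sum>ls\<in>index_lists n r.
      (\<Prod>i<r. ?c i (ls ! i)) * convolution r (P_factors \<rho> n t ls p) \<tau>))"
    by (simp add: convolution_expand_sum P_factors_def)
  also have "\<dots> = (\<Sum>ls\<in>index_lists n r. (\<Prod>i<r. ?c i (ls ! i)) * P_tuple \<rho> n r t ls \<tau>)"
    by (simp add: P_tuple_eq_convolution index_lists_length sum_distrib_left sum_distrib_right
        algebra_simps sum.swap[where A="index_lists n r"])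
  finally show ?thesis by (simp add: of_int_prod)
qed

lemma lookup_wedge_hom:
  fixes \<phi>s :: "nat \<Rightarrow> (nat \<Rightarrow> int) \<Rightarrow> ('g::{ab_group_add,finite} \<Rightarrow>\<^sub>0 int)"
  assumes h: "\<And>i. i < r \<Longrightarrow> is_hom \<rho> n (\<phi>s i)" and x: "x \<in> formal n r"
  shows "Poly_Mapping.lookup (wedge_hom r \<phi>s x) \<tau>
    = (\<Sum>ls\<in>index_lists n r. of_int (\<Prod>i<r. Poly_Mapping.lookup (\<phi>s i (basis_vec (ls ! i))) 0)
        * P_map \<rho> n r x ls \<tau>)"
proof -
  have xt: "x t \<noteq> 0 \<Longrightarrow> t \<in> tuples n r" for t using x unfolding formal_def by auto
  have "Poly_Mapping.lookup (wedge_hom r \<phi>s x) \<tau>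
      = (\<Sum>t | x t \<noteq> 0. x t * of_int (Poly_Mapping.lookup (det (mat r r (\<lambda>(i, j). \<phi>s i (t ! j)))) \<tau>))"
    unfolding wedge_hom_def lookup_sum
    by (simp add: lookup_single_mult lookup_map_of_int flip: single_of_int)
  also have "\<dots> = (\<Sum>t | x t \<noteq> 0. x t * (\<Sum>ls\<in>index_lists n r.
      of_int (\<Prod>i<r. Poly_Mapping.lookup (\<phi>s i (basis_vec (ls ! i))) 0) * P_tuple \<rho> n r t ls \<tau>))"
    by (intro sum.cong refl) (simp add: lookup_det_hom[OF h xt])
  also have "\<dots> = (\<Sum>ls\<in>index_lists n r. of_int (\<Prod>i<r. Poly_Mapping.lookup (\<phi>s i (basis_vec (ls ! i))) 0)
      * P_map \<rho> n r x ls \<tau>)"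
    unfolding P_map_def by (simp add: sum_distrib_left algebra_simps sum.swap[where A="index_lists n r"])
  finally show ?thesis .
qed

lemma P_map_outside: "length is \<noteq> r \<or> (\<exists>i\<in>set is. n \<le> i) \<Longrightarrow> P_map \<rho> n r x is \<tau> = 0"
  unfolding P_map_def by (simp add: P_tuple_outside)

text \<open>Evaluating at the coordinate homomorphisms \<open>coord_hom (is ! i)\<close> recovers the coordinate of \<open>P x\<close> at \<open>is\<close>.\<close>

lemma P_map_rubin_integral:
  fixes \<rho> :: "'g::{ab_group_add,finite} \<Rightarrow> nat \<Rightarrow> nat \<Rightarrow> int"
  assumes R: "is_lattice_rep n \<rho>" and x: "x \<in> rubin \<rho> n r"
  shows "P_map \<rho> n r x is \<tau> \<in> \<int>"
proof (cases "is \<in> index_lists n r")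
  case False
  then show ?thesis by (simp add: P_map_outside[OF not_in_index_lists[OF False]])
next
  case True
  let ?\<phi>s = "\<lambda>i. coord_hom \<rho> n (is ! i)"
  have h: "\<And>i. i < r \<Longrightarrow> is_hom \<rho> n (?\<phi>s i)" using is_hom_coord_hom[OF R] by blast
  have xf: "x \<in> formal n r" using x unfolding rubin_def by blast
  have "wedge_hom r ?\<phi>s x \<in> range (Poly_Mapping.map of_int)" using x h unfolding rubin_def by simp
  then have "Poly_Mapping.lookup (wedge_hom r ?\<phi>s x) \<tau> \<in> \<int>" by (auto simp: lookup_map_of_int)
  moreover have "of_int (\<Prod>i<r. Poly_Mapping.lookup (?\<phi>s i (basis_vec (ls ! i))) 0) * P_map \<rho> n r x ls \<tau>
      = (if ls = is then P_map \<rho> n r x ls \<tau> else 0)"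
    if ls: "ls \<in> index_lists n r" for ls
  proof -
    have "Poly_Mapping.lookup (?\<phi>s i (basis_vec (ls ! i))) 0 = (if is ! i = ls ! i then 1 else 0)" if "i < r" for i
      using that ls act_zero[OF R basis_vec_in_lat[OF index_lists_nth[OF ls that]]]
      by (simp add: lookup_coord_hom basis_vec_def)
    then show ?thesis using ls True
      by (auto simp: index_lists_length intro: nth_equalityI intro!: prod_zero)
  qed
  then have "Poly_Mapping.lookup (wedge_hom r ?\<phi>s x) \<tau>
      = (\<Sum>ls\<in>index_lists n r. if ls = is then P_map \<rho> n r x ls \<tau> else 0)"
    by (simp add: lookup_wedge_hom[OF h xf] cong: sum.cong)
  ultimately show ?thesis using True by (simp add: sum.delta')
qed

lemma c_act_P_map:
  assumes R: "is_lattice_rep n \<rho>" and r: "r \<ge> 1" and x: "x \<in> formal n r"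
  shows "c_act \<rho> n \<sigma> (P_map \<rho> n r x) = g_act \<sigma> (P_map \<rho> n r x)"
proof (intro ext)
  fix "is" \<tau>
  have xt: "x t \<noteq> 0 \<Longrightarrow> t \<in> tuples n r" for t using x unfolding formal_def by auto
  show "c_act \<rho> n \<sigma> (P_map \<rho> n r x) is \<tau> = g_act \<sigma> (P_map \<rho> n r x) is \<tau>"
  proof (cases "is")
    case Nil
    then show ?thesis using r unfolding c_act_def g_act_def by (simp add: P_map_outside)
  next
    case (Cons i rest)
    show ?thesis
    proof (cases "i < n")
      case True
      have "(\<Sum>k<n. of_int (\<rho> \<sigma> i k) * P_tuple \<rho> n r t (k # rest) \<tau>) = P_tuple \<rho> n r t (i # rest) (\<tau> - \<sigma>)"
        if "x t \<noteq> 0" for t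
        using fun_cong[OF fun_cong[OF c_act_P_tuple[OF R xt[OF that] r, of \<sigma>]], of "i # rest" \<tau>] True
        unfolding c_act_def g_act_def by simp
      then have "(\<Sum>t | x t \<noteq> 0. x t * (\<Sum>k<n. of_int (\<rho> \<sigma> i k) * P_tuple \<rho> n r t (k # rest) \<tau>))
          = (\<Sum>t | x t \<noteq> 0. x t * P_tuple \<rho> n r t (i # rest) (\<tau> - \<sigma>))"
        by (intro sum.cong) auto
      then show ?thesis using Cons True unfolding c_act_def g_act_def P_map_def
        by (simp add: sum_distrib_left mult.left_commute sum.swap[where A="{..<n}"])
    next
      case False
      then show ?thesis using Cons unfolding c_act_def g_act_def by (simp add: P_map_outside)
    qed
  qed
qed

lemma P_map_rubin_in_star:
  fixes \<rho> :: "'g::{ab_group_add,finite} \<Rightarrow> nat \<Rightarrow> nat \<Rightarrow> int"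
  assumes R: "is_lattice_rep n \<rho>" and r: "r \<ge> 1" and x: "x \<in> rubin \<rho> n r"
  shows "P_map \<rho> n r x \<in> star \<rho> n r"
proof -
  have xf: "x \<in> formal n r" using x unfolding rubin_def by blast
  have "in_Qtensor n r (P_map \<rho> n r x)" unfolding in_Qtensor_def using P_map_outside by blast
  moreover have "antisymmetric r (P_map \<rho> n r x)"
    unfolding antisymmetric_def P_map_def by (auto simp: P_tuple_permute_indices sum_distrib_left algebra_simps)
  ultimately show ?thesis unfolding star_def in_tensor_def
    using c_act_P_map[OF R r xf] P_map_rubin_integral[OF R x] by blast
qed

section \<open>Surjectivity onto \<open>(M, G)\<^sup>r\<^sub>\<star>\<close>\<close>

lemma star_antisymmetric:
  "T \<in> star \<rho> n r \<Longrightarrow> f permutes {..<r} \<Longrightarrow> length xs = r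
    \<Longrightarrow> T (permute_list f xs) \<tau> = of_int (sign f) * T xs \<tau>"
  unfolding star_def antisymmetric_def permute_list_def by blast

lemma star_outside: "T \<in> star \<rho> n r \<Longrightarrow> length is \<noteq> r \<or> (\<exists>i\<in>set is. n \<le> i) \<Longrightarrow> T is \<tau> = 0"
  unfolding star_def in_tensor_def in_Qtensor_def by blast

lemma star_integral: "T \<in> star \<rho> n r \<Longrightarrow> T is \<tau> \<in> \<int>"
  unfolding star_def in_tensor_def by blast

lemma star_Cons_shift:
  assumes "T \<in> star \<rho> n r" and "i < n"
  shows "(\<Sum>k<n. of_int (\<rho> \<sigma> i k) * T (k # rest) \<tau>) = T (i # rest) (\<tau> - \<sigma>)"
proof -
  have "c_act \<rho> n \<sigma> T (i # rest) \<tau> = g_act \<sigma> T (i # rest) \<tau>" using assms(1) unfolding star_def by simp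
  then show ?thesis using assms(2) unfolding c_act_def g_act_def by simp
qed

text \<open>By antisymmetry, the compatibility \<open>c\<^sub>\<sigma> = \<sigma>\<close> on the first factor holds on every factor.\<close>

lemma star_slot_shift:
  assumes T: "T \<in> star \<rho> n r" and js: "js \<in> index_lists n r" and j: "j < r"
  shows "(\<Sum>k<n. of_int (\<rho> \<sigma> (js ! j) k) * T (js[j := k]) \<tau>) = T js (\<tau> - \<sigma>)"
proof -
  let ?w = "Transposition.transpose 0 j"
  have w: "?w permutes {..<r}" using j by (intro permutes_swap_id) auto
  have len: "length js = r" using js by (rule index_lists_length)
  have swap: "T xs \<tau>' = of_int (sign ?w) * T (permute_list ?w xs) \<tau>'" if "length xs = r" for xs \<tau>'
    using star_antisymmetric[OF T w that, of \<tau>'] sign_idempotent[of ?w]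
    by (metis mult.assoc mult_1 of_int_1 of_int_mult)
  have upd: "permute_list ?w (js[j := k]) = (permute_list ?w js)[0 := k]" for k
    using j len by (intro nth_equalityI) (auto simp: permute_list_def Transposition.transpose_def nth_list_update)
  obtain i rest where pjs: "permute_list ?w js = i # rest"
    using j len by (cases "permute_list ?w js") (auto dest: arg_cong[of _ _ length])
  have "permute_list ?w js ! 0 = js ! j" using permute_list_nth[of ?w js 0] w len j by simp
  then have i: "i = js ! j" using pjs by simp
  have "i < n" using i index_lists_nth[OF js j] by simp
  have "(\<Sum>k<n. of_int (\<rho> \<sigma> (js ! j) k) * T (js[j := k]) \<tau>)
      = of_int (sign ?w) * (\<Sum>k<n. of_int (\<rho> \<sigma> i k) * T (k # rest) \<tau>)"
  proof -
    have "T (js[j := k]) \<tau> = of_int (sign ?w) * T (k # rest) \<tau>" for k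
      using swap[of "js[j := k]" \<tau>] len by (simp add: upd pjs)
    then show ?thesis by (simp add: i sum_distrib_left mult.left_commute)
  qed
  also have "\<dots> = of_int (sign ?w) * T (permute_list ?w js) (\<tau> - \<sigma>)"
    using star_Cons_shift[OF T \<open>i < n\<close>] pjs by simp
  also have "\<dots> = T js (\<tau> - \<sigma>)" using swap[OF len] by simp
  finally show ?thesis .
qed

lemma star_twisted_sum:
  assumes T: "T \<in> star \<rho> n r"
  shows "js \<in> index_lists n r \<Longrightarrow> m \<le> r \<Longrightarrow>
    (\<Sum>ls\<in>index_lists n m. T (ls @ drop m js) \<tau> * (\<Prod>j<m. of_int (\<rho> (a j) (js ! j) (ls ! j))))
      = T js (\<tau> - (\<Sum>j<m. a j))"
proof (induction m arbitrary: js)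
  case 0
  then show ?case by (simp add: index_lists_0)
next
  case (Suc m)
  then have js: "js \<in> index_lists n r" and m: "m < r" by auto
  have len: "length js = r" using js by (rule index_lists_length)
  have step: "(\<Sum>ls\<in>index_lists n m. T (ls @ k # drop (Suc m) js) \<tau>
        * (\<Prod>j<m. of_int (\<rho> (a j) (js ! j) (ls ! j))))
      = T (js[m := k]) (\<tau> - (\<Sum>j<m. a j))" if "k < n" for k
  proof -
    have "drop m (js[m := k]) = k # drop (Suc m) js"
      using m len by (simp add: upd_conv_take_nth_drop)
    moreover have "js[m := k] \<in> index_lists n r" by (rule index_lists_update[OF js that])
    moreover have "(\<Prod>j<m. of_int (\<rho> (a j) (js[m := k] ! j) (ls ! j)))
        = (\<Prod>j<m. (of_int (\<rho> (a j) (js ! j) (ls ! j)) :: rat))" for ls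
      by (intro prod.cong) auto
    ultimately show ?thesis using Suc.IH[of "js[m := k]"] m by simp
  qed
  have "(\<Sum>ls\<in>index_lists n (Suc m). T (ls @ drop (Suc m) js) \<tau> * (\<Prod>j<Suc m. of_int (\<rho> (a j) (js ! j) (ls ! j))))
      = (\<Sum>ls\<in>index_lists n m. \<Sum>k<n. of_int (\<rho> (a m) (js ! m) k) * (T (ls @ k # drop (Suc m) js) \<tau>
          * (\<Prod>j<m. of_int (\<rho> (a j) (js ! j) (ls ! j)))))"
    unfolding sum_index_lists_Suc
    by (intro sum.cong refl) (auto simp: prod.lessThan_Suc nth_append index_lists_length intro!: prod.cong)
  also have "\<dots> = (\<Sum>k<n. of_int (\<rho> (a m) (js ! m) k) * T (js[m := k]) (\<tau> - (\<Sum>j<m. a j)))"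
    by (simp add: sum.swap[where B="{..<n}"] sum_distrib_left[symmetric] step)
  also have "\<dots> = T js (\<tau> - (\<Sum>j<Suc m. a j))"
    using star_slot_shift[OF T js m, of "a m" "\<tau> - (\<Sum>j<m. a j)"] by (simp add: diff_diff_eq add.commute)
  finally show ?case .
qed

lemma act_basis_vec: "i < n \<Longrightarrow> k < n \<Longrightarrow> act \<rho> n \<sigma> (basis_vec k) i = \<rho> \<sigma> i k"
  by (simp add: act_def basis_vec_def if_distrib sum.delta cong: if_cong)

lemma P_tuple_basis_vec:
  assumes "is \<in> index_lists n r" and js: "js \<in> index_lists n r"
  shows "P_tuple \<rho> n r (map basis_vec is) js \<tau> = (\<Sum>f | f permutes {..<r}. of_int (sign f) *
     (\<Sum>s\<in>sum_fiber r \<tau>. \<Prod>j<r. of_int (\<rho> (- s j) (js ! j) (is ! f j))))"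
  unfolding P_tuple_def sum_fiber_def
  using assms permutes_lessThanD(3)
  by (auto simp: index_lists_length index_lists_nth act_basis_vec intro!: sum.cong prod.cong)

lemma sum_star_permute:
  assumes T: "T \<in> star \<rho> n r" and f: "f permutes {..<r}"
  shows "(\<Sum>is\<in>index_lists n r. T is 0 * (\<Prod>j<r. g j (is ! f j)))
    = of_int (sign f) * (\<Sum>is\<in>index_lists n r. T is 0 * (\<Prod>j<r. g j (is ! j)))"
  unfolding sum_distrib_left
proof (rule sum.reindex_bij_witness[where j="permute_list f" and i="permute_list (Hilbert_Choice.inv f)"])
  fix "is" assume "is": "is \<in> index_lists n r"
  then have len: "length is = r" by (rule index_lists_length)
  have f': "f permutes {..<length is}" "Hilbert_Choice.inv f permutes {..<length is}"
    using f permutes_inv[OF f] len by simp_all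
  show "permute_list (Hilbert_Choice.inv f) (permute_list f is) = is"
    "permute_list f (permute_list (Hilbert_Choice.inv f) is) = is"
    using permute_list_compose[OF f'(2), of f] permute_list_compose[OF f'(1), of "Hilbert_Choice.inv f"]
      permutes_inv_o[OF f] by simp_all
  show "permute_list f is \<in> index_lists n r" "permute_list (Hilbert_Choice.inv f) is \<in> index_lists n r"
    using "is" f' unfolding index_lists_def by simp_all
  have "permute_list f is ! j = is ! f j" if "j < r" for j
    using permute_list_nth[of f "is" j] f len that by simp
  then have prod: "(\<Prod>j<r. g j (permute_list f is ! j)) = (\<Prod>j<r. g j (is ! f j))"
    by (intro prod.cong) simp_all
  show "of_int (sign f) * (T (permute_list f is) 0 * (\<Prod>j<r. g j (permute_list f is ! j)))
      = T is 0 * (\<Prod>j<r. g j (is ! f j))"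
    by (simp add: star_antisymmetric[OF T f len] prod mult.assoc sign_mult_sign)
qed

lemma sum_star_P_tuple_basis_vec:
  fixes \<rho> :: "'g::{ab_group_add,finite} \<Rightarrow> nat \<Rightarrow> nat \<Rightarrow> int"
  assumes T: "T \<in> star \<rho> n r" and r: "r \<ge> 1" and js: "js \<in> index_lists n r"
  shows "(\<Sum>is\<in>index_lists n r. T is 0 * P_tuple \<rho> n r (map basis_vec is) js \<tau>)
    = P_norm_factor r TYPE('g) * T js \<tau>"
proof -
  let ?F = "{f. f permutes {..<r}}" and ?S = "sum_fiber r \<tau>"
  let ?R = "\<lambda>s j k. (of_int (\<rho> (- s j) (js ! j) k) :: rat)"
  have twisted: "(\<Sum>is\<in>index_lists n r. T is 0 * (\<Prod>j<r. ?R s j (is ! j))) = T js \<tau>" if s: "s \<in> ?S" for s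
  proof -
    have "(\<Sum>j<r. - s j) = - \<tau>" using s unfolding sum_fiber_def by (simp add: sum_negf)
    then show ?thesis
      using star_twisted_sum[OF T js order.refl, of 0 "\<lambda>j. - s j"] index_lists_length[OF js] by simp
  qed
  have "(\<Sum>is\<in>index_lists n r. T is 0 * P_tuple \<rho> n r (map basis_vec is) js \<tau>)
      = (\<Sum>f\<in>?F. of_int (sign f) * (\<Sum>s\<in>?S. \<Sum>is\<in>index_lists n r. T is 0 * (\<Prod>j<r. ?R s j (is ! f j))))"
    using js by (simp add: P_tuple_basis_vec sum_distrib_left mult_ac sum.swap[where A="index_lists n r"])
  also have "\<dots> = (\<Sum>f\<in>?F. of_int (sign f) * (\<Sum>s\<in>?S. of_int (sign f) * T js \<tau>))"
  proof (intro sum.cong refl arg_cong[where f="\<lambda>x. _ * x"])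
    fix f s assume "f \<in> ?F" and "s \<in> ?S"
    then show "(\<Sum>is\<in>index_lists n r. T is 0 * (\<Prod>j<r. ?R s j (is ! f j))) = of_int (sign f) * T js \<tau>"
      using sum_star_permute[OF T, of f "?R s"] twisted[of s] by simp
  qed
  also have "\<dots> = P_norm_factor r TYPE('g) * T js \<tau>"
    by (rule sum_signs_sum_fiber[OF r])
  finally show ?thesis .
qed

lemma support_basis_combination:
  "{t. basis_combination n r F t \<noteq> 0} \<subseteq> map basis_vec ` index_lists n r"
proof (rule subsetI, rule ccontr)
  fix t assume "t \<in> {t. basis_combination n r F t \<noteq> 0}" and "t \<notin> map basis_vec ` index_lists n r"
  then show False unfolding basis_combination_def by (auto simp: delta_def intro!: sum.neutral)
qed

lemma P_map_basis_combination:
  "P_map \<rho> n r (basis_combination n r F) js \<tau>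
    = (\<Sum>is\<in>index_lists n r. F is * P_tuple \<rho> n r (map basis_vec is) js \<tau>)"
proof -
  have inj: "inj_on (map basis_vec) (index_lists n r)"
    using inj_on_subset[OF inj_mapI[OF inj_basis_vec]] by simp
  have coeff: "basis_combination n r F (map basis_vec is) = F is" if "is \<in> index_lists n r" for "is"
    unfolding basis_combination_def using that
    by (simp add: delta_def inj_map_eq_map[OF inj_basis_vec] if_distrib sum.delta cong: if_cong)
  have "P_map \<rho> n r (basis_combination n r F) js \<tau>
      = (\<Sum>t\<in>map basis_vec ` index_lists n r. basis_combination n r F t * P_tuple \<rho> n r t js \<tau>)"
    by (intro P_map_eq_sum support_basis_combination) simp
  also have "\<dots> = (\<Sum>is\<in>index_lists n r. F is * P_tuple \<rho> n r (map basis_vec is) js \<tau>)"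
    by (simp add: sum.reindex[OF inj] coeff)
  finally show ?thesis .
qed

lemma basis_combination_in_formal: "basis_combination n r F \<in> formal n r"
proof -
  have "map basis_vec ` index_lists n r \<subseteq> tuples n r"
    unfolding tuples_def index_lists_def by (fastforce intro: basis_vec_in_lat)
  with support_basis_combination[of n r F] show ?thesis
    unfolding formal_def by (auto intro: finite_subset[of _ "map basis_vec ` index_lists n r"])
qed

lemma rubin_iff_P_map_integral:
  fixes \<rho> :: "'g::{ab_group_add,finite} \<Rightarrow> nat \<Rightarrow> nat \<Rightarrow> int"
  assumes R: "is_lattice_rep n \<rho>"
  shows "x \<in> rubin \<rho> n r \<longleftrightarrow> x \<in> formal n r \<and> (\<forall>is \<tau>. P_map \<rho> n r x is \<tau> \<in> \<int>)"
proof
  assume "x \<in> rubin \<rho> n r"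
  then show "x \<in> formal n r \<and> (\<forall>is \<tau>. P_map \<rho> n r x is \<tau> \<in> \<int>)"
    using P_map_rubin_integral[OF R] unfolding rubin_def by blast
next
  assume x: "x \<in> formal n r \<and> (\<forall>is \<tau>. P_map \<rho> n r x is \<tau> \<in> \<int>)"
  have "wedge_hom r \<phi>s x \<in> range (Poly_Mapping.map of_int)" if h: "\<forall>i<r. is_hom \<rho> n (\<phi>s i)" for \<phi>s
  proof (rule in_range_map_of_int)
    fix k
    show "Poly_Mapping.lookup (wedge_hom r \<phi>s x) k \<in> \<int>"
      using x h by (subst lookup_wedge_hom) (auto intro!: Ints_sum Ints_mult)
  qed
  then show "x \<in> rubin \<rho> n r" using x unfolding rubin_def by blast
qed

lemma star_in_image_P_map_rubin:
  fixes \<rho> :: "'g::{ab_group_add,finite} \<Rightarrow> nat \<Rightarrow> nat \<Rightarrow> int"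
  assumes R: "is_lattice_rep n \<rho>" and r: "r \<ge> 1" and T: "T \<in> star \<rho> n r"
  shows "\<exists>x\<in>rubin \<rho> n r. P_map \<rho> n r x = T"
proof
  let ?x = "basis_combination n r (\<lambda>is. T is 0 / P_norm_factor r TYPE('g))"
  show P: "P_map \<rho> n r ?x = T"
  proof (intro ext)
    fix js \<tau>
    show "P_map \<rho> n r ?x js \<tau> = T js \<tau>"
    proof (cases "js \<in> index_lists n r")
      case True
      then show ?thesis using sum_star_P_tuple_basis_vec[OF T r True, of \<tau>] P_norm_factor_nonzero[where 'g='g]
        by (simp add: P_map_basis_combination sum_divide_distrib[symmetric] field_simps)
    next
      case False
      then show ?thesis
        using P_map_outside[OF not_in_index_lists[OF False]] star_outside[OF T not_in_index_lists[OF False]]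
        by simp
    qed
  qed
  show "?x \<in> rubin \<rho> n r"
    unfolding rubin_iff_P_map_integral[OF R] P using basis_combination_in_formal star_integral[OF T] by blast
qed

theorem proposition3p3:
  fixes \<rho> :: "'g::{ab_group_add, finite} \<Rightarrow> nat \<Rightarrow> nat \<Rightarrow> int" and n r :: nat
  assumes "is_lattice_rep n \<rho>" and "r \<ge> 1"
  shows "(\<forall>x\<in>rel_span \<rho> n r. P_map \<rho> n r x = (\<lambda>_ _. 0))
    \<and> (\<forall>t\<in>tuples n r. \<forall>\<sigma>. P_tuple \<rho> n r (t[0 := act \<rho> n \<sigma> (t ! 0)]) = g_act \<sigma> (P_tuple \<rho> n r t))
    \<and> (\<forall>x\<in>rubin \<rho> n r. P_map \<rho> n r x \<in> star \<rho> n r)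
    \<and> (\<forall>T\<in>star \<rho> n r. \<exists>x\<in>rubin \<rho> n r. P_map \<rho> n r x = T)
    \<and> (\<forall>x\<in>rubin \<rho> n r. P_map \<rho> n r x = (\<lambda>_ _. 0) \<longrightarrow> x \<in> rel_span \<rho> n r)"
proof (intro conjI ballI allI impI)
  show "P_map \<rho> n r x = (\<lambda>_ _. 0)" if "x \<in> rel_span \<rho> n r" for x
    using P_map_rel_span[OF assms(1) that] .
  show "P_tuple \<rho> n r (t[0 := act \<rho> n \<sigma> (t ! 0)]) = g_act \<sigma> (P_tuple \<rho> n r t)" if "t \<in> tuples n r" for t \<sigma>
    unfolding g_act_def using P_tuple_update_act[OF assms(1) that, of 0] assms(2) by (intro ext) simp
  show "P_map \<rho> n r x \<in> star \<rho> n r" if "x \<in> rubin \<rho> n r" for x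
    using P_map_rubin_in_star[OF assms that] .
  show "\<exists>x\<in>rubin \<rho> n r. P_map \<rho> n r x = T" if "T \<in> star \<rho> n r" for T
    using star_in_image_P_map_rubin[OF assms that] .
  show "x \<in> rel_span \<rho> n r" if "x \<in> rubin \<rho> n r" and "P_map \<rho> n r x = (\<lambda>_ _. 0)" for x
    using rel_span_if_P_map_eq_0[OF assms _ that(2)] that(1) rubin_iff_P_map_integral[OF assms(1)] by blast
qed

end
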